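(* Fix an integer $N\ge0$, $y\in\mathbb{C}^*$ and a square root $\sqrt{pq}$. For $\underline u=(\zeta,\chi,\kappa)\in(\mathbb{C}^* )^3$ generic, define $(N+1)\times(N+1)$ matrices, with indices $n,m=0,\dots,N$, $$S_1(\underline u)=\big(M_{nm}(\zeta^2,\chi^2)\big)_{n,m},\qquad S_2(\underline u)=\operatorname{diag}\big(D_n(\zeta^2;b(\underline u),c(\underline u))\big)_n,$$ where $$b(\underline u)=\sqrt{pq}\,\frac{\zeta\chi}{\kappa}\,y,\qquad c(\underline u)=\frac{\sqrt{pq}}{p}\,\frac{\zeta\chi}{\kappa}\,y^{-1}.$$ Let $s_1(\zeta,\chi,\kappa)=(\chi,\zeta,\kappa)$ and $s_2(\zeta,\chi,\kappa)=(\zeta,\kappa,\chi)$. Then: (i) $S_2(s_2\underline u)\,S_2(\underline u)=I$; (ii) $S_1(s_2s_1\underline u)\,S_2(s_1\underline u)\,S_1(\underline u)=S_2(s_1s_2\underline u)\,S_1(s_2\underline u)\,S_2(\underline u)$.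
   Context: Fix $p,q\in\mathbb{C}$ with $0<|p|,|q|<1$. Notation: $(z;p)_\infty=\prod_{j\ge0}(1-zp^j)$; $\theta(z;p)=(z;p)_\infty(p/z;p)_\infty$. The elliptic Pochhammer symbol is $\theta(z)_n=\prod_{j=0}^{n-1}\theta(zq^j;p)$ for $n\ge0$, and $\theta(z_1,\dots,z_r)_n=\prod_i\theta(z_i)_n$. For $0\le m\le N$ define $$M_{Nm}(a,k)=\frac{\theta(k)_{N+m}\,\theta(k/a)_{N-m}}{\theta(qa)_{N+m}\,\theta(q)_{N-m}}\,\frac{\theta(aq^{2m};p)}{\theta(a;p)}\,a^{N-m},$$ and set $M_{Nm}(a,k)=0$ for $m>N$. Also define $$D_n(a;b,c)=\frac{\theta(b,c)_n}{\theta(aq/b,aq/c)_n}\Big(\frac{aq}{bc}\Big)^n.$$ "Generic" means that all theta functions appearing in denominators are nonzero. *)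

theory Defs
  imports "HOL-Analysis.Analysis"
begin

definition qpoch_inf :: "complex \<Rightarrow> complex \<Rightarrow> complex" where
  "qpoch_inf z p = (\<Prod>j. 1 - z * p ^ j)"

definition theta :: "complex \<Rightarrow> complex \<Rightarrow> complex" where
  "theta z p = qpoch_inf z p * qpoch_inf (p / z) p"

definition epoch :: "complex \<Rightarrow> complex \<Rightarrow> complex \<Rightarrow> nat \<Rightarrow> complex" where
  "epoch p q z n = (\<Prod>j<n. theta (z * q ^ j) p)"

definition Mcoef :: "complex \<Rightarrow> complex \<Rightarrow> nat \<Rightarrow> nat \<Rightarrow> complex \<Rightarrow> complex \<Rightarrow> complex" where
  "Mcoef p q n m a k =
     (if m \<le> n then
        (epoch p q k (n + m) * epoch p q (k / a) (n - m))
          / (epoch p q (q * a) (n + m) * epoch p q q (n - m))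
        * (theta (a * q ^ (2 * m)) p / theta a p) * a ^ (n - m)
      else 0)"

definition Dcoef :: "complex \<Rightarrow> complex \<Rightarrow> nat \<Rightarrow> complex \<Rightarrow> complex \<Rightarrow> complex \<Rightarrow> complex" where
  "Dcoef p q n a b c =
     (epoch p q b n * epoch p q c n) / (epoch p q (a * q / b) n * epoch p q (a * q / c) n)
     * (a * q / (b * c)) ^ n"

type_synonym triple = "complex \<times> complex \<times> complex"

definition s1 :: "triple \<Rightarrow> triple" where
  "s1 u = (case u of (z, x, k) \<Rightarrow> (x, z, k))"

definition s2 :: "triple \<Rightarrow> triple" where
  "s2 u = (case u of (z, x, k) \<Rightarrow> (z, k, x))"

text \<open>b(u), c(u); r is the fixed square root of pq.\<close>
definition bpar :: "complex \<Rightarrow> complex \<Rightarrow> triple \<Rightarrow> complex" where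
  "bpar r y u = (case u of (z, x, k) \<Rightarrow> r * (z * x / k) * y)"

definition cpar :: "complex \<Rightarrow> complex \<Rightarrow> complex \<Rightarrow> triple \<Rightarrow> complex" where
  "cpar p r y u = (case u of (z, x, k) \<Rightarrow> (r / p) * (z * x / k) * inverse y)"

text \<open>Matrices of size (N+1)x(N+1), indices 0..N, represented as functions.\<close>
definition S1mat :: "complex \<Rightarrow> complex \<Rightarrow> triple \<Rightarrow> nat \<Rightarrow> nat \<Rightarrow> complex" where
  "S1mat p q u = (\<lambda>n m. case u of (z, x, k) \<Rightarrow> Mcoef p q n m (z\<^sup>2) (x\<^sup>2))"

definition S2mat :: "complex \<Rightarrow> complex \<Rightarrow> complex \<Rightarrow> complex \<Rightarrow> triple \<Rightarrow> nat \<Rightarrow> nat \<Rightarrow> complex" where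
  "S2mat p q r y u = (\<lambda>n m. if n = m then
      (case u of (z, x, k) \<Rightarrow> Dcoef p q n (z\<^sup>2) (bpar r y u) (cpar p r y u)) else 0)"

definition mmul :: "nat \<Rightarrow> (nat \<Rightarrow> nat \<Rightarrow> complex) \<Rightarrow> (nat \<Rightarrow> nat \<Rightarrow> complex) \<Rightarrow> nat \<Rightarrow> nat \<Rightarrow> complex" where
  "mmul N A B = (\<lambda>i k. \<Sum>j\<le>N. A i j * B j k)"

definition idmat :: "nat \<Rightarrow> nat \<Rightarrow> complex" where
  "idmat = (\<lambda>i j. if i = j then 1 else 0)"

definition mat_eq :: "nat \<Rightarrow> (nat \<Rightarrow> nat \<Rightarrow> complex) \<Rightarrow> (nat \<Rightarrow> nat \<Rightarrow> complex) \<Rightarrow> bool" where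
  "mat_eq N A B \<longleftrightarrow> (\<forall>i\<le>N. \<forall>j\<le>N. A i j = B i j)"

text \<open>Genericity: all theta functions in denominators of the entries of S1(u), resp. S2(u), are nonzero.\<close>
definition gen_S1 :: "complex \<Rightarrow> complex \<Rightarrow> nat \<Rightarrow> triple \<Rightarrow> bool" where
  "gen_S1 p q N u = (case u of (z, x, k) \<Rightarrow>
     theta (z\<^sup>2) p \<noteq> 0 \<and>
     (\<forall>n\<le>N. \<forall>m\<le>n. epoch p q (q * z\<^sup>2) (n + m) \<noteq> 0 \<and> epoch p q q (n - m) \<noteq> 0))"

definition gen_S2 :: "complex \<Rightarrow> complex \<Rightarrow> complex \<Rightarrow> complex \<Rightarrow> nat \<Rightarrow> triple \<Rightarrow> bool" where
  "gen_S2 p q r y N u = (case u of (z, x, k) \<Rightarrow>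
     (\<forall>n\<le>N. epoch p q (z\<^sup>2 * q / bpar r y u) n \<noteq> 0 \<and>
             epoch p q (z\<^sup>2 * q / cpar p r y u) n \<noteq> 0))"

end

theory Submission
  imports Defs "HOL-Complex_Analysis.Complex_Analysis"
begin

text \<open>
  Relation (i) is the reflection \<open>D\<^sub>n(a; aq/c, aq/b) D\<^sub>n(a; b, c) = 1\<close>.
  For (ii), with \<open>X = \<chi>\<^sup>2, A = \<zeta>\<^sup>2, K = \<kappa>\<^sup>2\<close> and \<open>B = b(u), C = c(u)\<close>, so that \<open>BCK = qXA\<close>, the
  \<open>(k + n, k)\<close> entry reduces after a shift of all parameters by powers of \<open>q\<close> to the summation
  \<open>\<Sum>\<^sub>l M\<^sub>n\<^sub>l(X, K) D\<^sub>l(X; B, C) M\<^sub>l\<^sub>0(A, X) = D\<^sub>n(K; BK/X, CK/X) M\<^sub>n\<^sub>0(A, K)\<close>.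
  This is proved by induction on \<open>n\<close>: both sides obey the same two-term recurrence, each instance of
  which is the Weierstrass three-term identity for \<open>\<theta>\<close>. That identity follows from Liouville's theorem:
  as a function of \<open>w\<close>, the defect is quasi-periodic under \<open>w \<mapsto> pw\<close> with the same multiplier as a
  product of two thetas whose zeros are simple and shared by the defect, so their quotient is a bounded
  entire function of \<open>log w\<close> that vanishes somewhere.
\<close>

section \<open>The theta function\<close>

lemma qpoch_inf_convergent_prod:
  assumes "norm (p::complex) < 1"
  shows "convergent_prod (\<lambda>j. 1 - z * p ^ j)"
proof -
  have "summable (\<lambda>i. norm ((1 - z * p ^ i) - 1))"
    using assms by (simp add: norm_mult norm_power summable_mult)
  then show ?thesis
    by (intro abs_convergent_prod_imp_convergent_prod summable_imp_abs_convergent_prod)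
qed

lemma qpoch_inf_has_prod:
  assumes "norm (p::complex) < 1"
  shows "(\<lambda>j. 1 - z * p ^ j) has_prod qpoch_inf z p"
  unfolding qpoch_inf_def using qpoch_inf_convergent_prod[OF assms] convergent_prod_has_prod by blast

lemma qpoch_inf_shift:
  assumes "norm (p::complex) < 1"
  shows "qpoch_inf z p = (1 - z) * qpoch_inf (z * p) p"
proof -
  have "(\<lambda>n. 1 - z * p ^ Suc n) has_prod qpoch_inf (z * p) p"
    using qpoch_inf_has_prod[OF assms, of "z * p"] by (simp add: mult_ac)
  then have "(\<lambda>n. 1 - z * p ^ n) has_prod (qpoch_inf (z * p) p * (1 - z * p ^ 0))"
    by (rule has_prod_Suc_imp[where f = "\<lambda>n. 1 - z * p ^ n"])
  then show ?thesis
    using has_prod_unique2[OF qpoch_inf_has_prod[OF assms, of z]] by (simp add: mult.commute)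
qed

lemma qpoch_inf_eq_0_iff:
  assumes "norm (p::complex) < 1"
  shows "qpoch_inf z p = 0 \<longleftrightarrow> (\<exists>j. z * p ^ j = 1)"
  using has_prod_eq_0_iff[OF qpoch_inf_has_prod[OF assms, of z]]
  by (auto simp: eq_commute[of 0] image_iff)

lemma qpoch_inf_holomorphic:
  assumes "norm (p::complex) < 1"
  shows "(\<lambda>z. qpoch_inf z p) holomorphic_on UNIV"
proof (rule holomorphic_uniform_sequence[where f = "\<lambda>n z. \<Prod>j<n. 1 - z * p ^ j"])
  fix n show "(\<lambda>z. \<Prod>j<n. 1 - z * p ^ j) holomorphic_on UNIV"
    by (intro holomorphic_intros)
next
  fix x :: complex
  define R where "R = norm x + 1"
  have "uniformly_convergent_on (cball 0 R) (\<lambda>N z. \<Prod>j<N. 1 - z * p ^ j)"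
  proof (rule uniformly_convergent_on_prod')
    show "uniformly_convergent_on (cball 0 R) (\<lambda>N z. \<Sum>n<N. norm (1 - z * p ^ n - 1))"
    proof (rule Weierstrass_m_test'[where M = "\<lambda>n. R * norm p ^ n"])
      fix n and z :: complex assume "z \<in> cball 0 R"
      then show "norm (norm (1 - z * p ^ n - 1)) \<le> R * norm p ^ n"
        by (simp add: norm_mult norm_power mult_right_mono)
    next
      show "summable (\<lambda>n. R * norm p ^ n)" using assms by (simp add: summable_mult)
    qed
  qed (auto intro!: continuous_intros)
  then obtain g where g: "uniform_limit (cball 0 R) (\<lambda>N z. \<Prod>j<N. 1 - z * p ^ j) g sequentially"
    unfolding uniformly_convergent_on_def by blast
  have "g z = qpoch_inf z p" if "z \<in> cball 0 R" for z
  proof -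
    have "(\<lambda>n. \<Prod>j<Suc n. 1 - z * p ^ j) \<longlonglongrightarrow> g z"
      using LIMSEQ_Suc[OF tendsto_uniform_limitI[OF g that]] .
    moreover have "(\<lambda>n. \<Prod>j<Suc n. 1 - z * p ^ j) \<longlonglongrightarrow> qpoch_inf z p"
      using convergent_prod_LIMSEQ[OF qpoch_inf_convergent_prod[OF assms, of z]]
      unfolding lessThan_Suc_atMost by (simp add: qpoch_inf_def)
    ultimately show ?thesis using tendsto_unique by force
  qed
  then have "uniform_limit (cball 0 R) (\<lambda>N z. \<Prod>j<N. 1 - z * p ^ j) g sequentially =
      uniform_limit (cball 0 R) (\<lambda>N z. \<Prod>j<N. 1 - z * p ^ j) (\<lambda>z. qpoch_inf z p) sequentially"
    by (intro uniform_limit_cong) auto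
  then have "uniform_limit (cball 0 R) (\<lambda>N z. \<Prod>j<N. 1 - z * p ^ j) (\<lambda>z. qpoch_inf z p) sequentially"
    using g by simp
  then have "uniform_limit (cball x 1) (\<lambda>N z. \<Prod>j<N. 1 - z * p ^ j) (\<lambda>z. qpoch_inf z p) sequentially"
    by (rule uniform_limit_on_subset) (simp add: cball_subset_cball_iff R_def)
  then show "\<exists>d>0. cball x d \<subseteq> UNIV \<and>
      uniform_limit (cball x d) (\<lambda>N z. \<Prod>j<N. 1 - z * p ^ j) (\<lambda>z. qpoch_inf z p) sequentially"
    by (intro exI[of _ 1]) auto
qed auto

locale theta_nome =
  fixes p :: complex
  assumes p_nonzero: "p \<noteq> 0" and norm_p_less_1: "norm p < 1"
begin

abbreviation th where "th z \<equiv> theta z p"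

lemma theta_1: "th 1 = 0"
  unfolding theta_def using qpoch_inf_eq_0_iff[OF norm_p_less_1, of 1] by (auto intro: exI[of _ 0])

lemma theta_shift_p_inverse:
  assumes "z \<noteq> 0"
  shows "th (p * z) * z = - th z" and "th (1 / z) * z = - th z"
proof -
  have a: "qpoch_inf z p = (1 - z) * qpoch_inf (z * p) p"
    by (rule qpoch_inf_shift[OF norm_p_less_1])
  have b: "qpoch_inf (1 / z) p = (1 - 1 / z) * qpoch_inf (p / z) p"
    using qpoch_inf_shift[OF norm_p_less_1, of "1 / z"] by simp
  have c: "(1 - 1 / z) * z = - (1 - z)" using assms by (simp add: field_simps)
  have d: "p / (p * z) = 1 / z" "p / (1 / z) = z * p" using assms p_nonzero by simp_all
  have "th (p * z) * z = qpoch_inf (z * p) p * ((1 - 1 / z) * z) * qpoch_inf (p / z) p"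
    unfolding theta_def d b by (simp add: mult_ac)
  then show "th (p * z) * z = - th z" unfolding c theta_def a by (simp add: algebra_simps)
  have "th (1 / z) * z = qpoch_inf (z * p) p * ((1 - 1 / z) * z) * qpoch_inf (p / z) p"
    unfolding theta_def d b by (simp add: mult_ac)
  then show "th (1 / z) * z = - th z" unfolding c theta_def a by (simp add: algebra_simps)
qed

lemma theta_div_p: "z \<noteq> 0 \<Longrightarrow> th (z / p) = - (z / p) * th z"
  using theta_shift_p_inverse(1)[of "z / p"] p_nonzero by (simp add: field_simps)

lemma theta_inverse: "z \<noteq> 0 \<Longrightarrow> th (inverse z) = - th z / z"
  using theta_shift_p_inverse(2)[of z] by (simp add: inverse_eq_divide field_simps)

lemma theta_swap: "a \<noteq> 0 \<Longrightarrow> b \<noteq> 0 \<Longrightarrow> th (b / a) = - (b / a) * th (a / b)"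
  using theta_shift_p_inverse(2)[of "a / b"] by (simp add: field_simps)

lemma theta_holomorphic: "(\<lambda>z. th z) holomorphic_on (- {0})"
  unfolding theta_def
  by (intro holomorphic_intros
      holomorphic_on_compose_gen[OF _ qpoch_inf_holomorphic[OF norm_p_less_1], unfolded o_def]) auto

lemma isCont_theta: "z \<noteq> 0 \<Longrightarrow> isCont (\<lambda>z. th z) z"
  using holomorphic_on_imp_continuous_on[OF theta_holomorphic]
  by (simp add: continuous_on_eq_continuous_at open_Compl)

lemma isCont_theta_compose: "isCont g x \<Longrightarrow> g x \<noteq> 0 \<Longrightarrow> isCont (\<lambda>y. th (g y)) x"
  using continuous_at_compose[of x g "\<lambda>z. th z"] isCont_theta unfolding o_def by blast

definition theta' where "theta' z = deriv (\<lambda>z. th z) z"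

lemma has_field_derivative_theta: "z \<noteq> 0 \<Longrightarrow> ((\<lambda>z. th z) has_field_derivative theta' z) (at z)"
  unfolding theta'_def by (rule holomorphic_derivI[OF theta_holomorphic]) auto

lemma theta'_1: "theta' 1 \<noteq> 0"
proof -
  define R where "R z = qpoch_inf (z * p) p * qpoch_inf (p / z) p" for z
  have th_eq: "th z = (1 - z) * R z" for z
    unfolding theta_def R_def using qpoch_inf_shift[OF norm_p_less_1, of z] by simp
  have "R holomorphic_on (- {0})"
    unfolding R_def
    by (intro holomorphic_intros
        holomorphic_on_compose_gen[OF _ qpoch_inf_holomorphic[OF norm_p_less_1], unfolded o_def]) auto
  then have "(R has_field_derivative deriv R 1) (at 1)"
    by (rule holomorphic_derivI) auto
  then have "((\<lambda>z. th z) has_field_derivative (- R 1)) (at 1)"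
    unfolding th_eq by (auto intro!: derivative_eq_intros)
  then have "theta' 1 = - R 1" using has_field_derivative_theta[of 1] DERIV_unique by auto
  moreover have "qpoch_inf p p \<noteq> 0"
  proof
    assume "qpoch_inf p p = 0"
    then obtain j where "p * p ^ j = 1"
      using qpoch_inf_eq_0_iff[OF norm_p_less_1] by auto
    then have "norm (p ^ Suc j) = 1" by simp
    moreover have "norm (p ^ Suc j) < 1"
      unfolding norm_power using norm_p_less_1 p_nonzero by (intro power_Suc_less_one) auto
    ultimately show False by simp
  qed
  ultimately show ?thesis by (simp add: R_def)
qed

text \<open>Differentiating \<open>th (p * z) * z = - th z\<close> at a zero of \<open>th\<close>.\<close>
lemma theta'_shift_p:
  assumes z: "z \<noteq> 0" and tz: "th z = 0"
  shows "th (p * z) = 0" "p * z * theta' (p * z) = - theta' z"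
proof -
  show "th (p * z) = 0" using theta_shift_p_inverse(1)[OF z] tz z by simp
  have pz: "p * z \<noteq> 0" using z p_nonzero by simp
  have "((\<lambda>w. p * w) has_field_derivative p) (at z)"
    using DERIV_cmult[OF DERIV_ident, of p] by simp
  from DERIV_chain2[OF has_field_derivative_theta[OF pz] this]
  have "((\<lambda>w. th (p * w) * w) has_field_derivative theta' (p * z) * p * z + th (p * z)) (at z)"
    using DERIV_mult[OF _ DERIV_ident] by fastforce
  then have "((\<lambda>w. - th w) has_field_derivative theta' (p * z) * p * z + th (p * z)) (at z)"
    by (rule has_field_derivative_transform_within_open[of _ _ _ "- {0}"])
       (use z theta_shift_p_inverse(1) in auto)
  moreover have "((\<lambda>w. - th w) has_field_derivative - theta' z) (at z)"
    using DERIV_minus[OF has_field_derivative_theta[OF z]] .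
  ultimately have "theta' (p * z) * p * z + th (p * z) = - theta' z" by (rule DERIV_unique)
  then show "p * z * theta' (p * z) = - theta' z"
    using \<open>th (p * z) = 0\<close> by (simp add: algebra_simps)
qed

lemma theta_zeros_power_int: "th (p powi k) = 0 \<and> theta' (p powi k) \<noteq> 0"
proof -
  have pos: "th (p ^ n) = 0 \<and> theta' (p ^ n) \<noteq> 0 \<and>
      th (p powi (- int n)) = 0 \<and> theta' (p powi (- int n)) \<noteq> 0" for n
  proof (induction n)
    case 0 then show ?case using theta_1 theta'_1 by simp
  next
    case (Suc n)
    have "p ^ n \<noteq> 0" using p_nonzero by simp
    then have up: "th (p ^ Suc n) = 0" "theta' (p ^ Suc n) \<noteq> 0"
      using theta'_shift_p[of "p ^ n"] Suc by auto
    define w where "w = p powi (- int (Suc n))"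
    have w0: "w \<noteq> 0" unfolding w_def using p_nonzero by simp
    have pw: "p * w = p powi (- int n)" unfolding w_def using p_nonzero
      by (simp only: power_int_minus power_int_of_nat) (simp add: field_simps)
    have "th w = 0" using theta_shift_p_inverse(1)[OF w0] w0 Suc pw by auto
    moreover have "theta' w \<noteq> 0" using theta'_shift_p[OF w0 \<open>th w = 0\<close>] Suc pw w0 p_nonzero by auto
    ultimately show ?case using up w_def by simp
  qed
  show ?thesis
  proof (cases "k \<ge> 0")
    case True
    then obtain n where "k = int n" by (intro that[of "nat k"]) simp
    then show ?thesis using pos[of n] by (simp add: power_int_of_nat)
  next
    case False
    then obtain n where "k = - int n" by (intro that[of "nat (- k)"]) simp
    then show ?thesis using pos[of n] by simp
  qed
qed

lemma theta_eq_0_iff: "z \<noteq> 0 \<Longrightarrow> th z = 0 \<longleftrightarrow> (\<exists>k::int. z = p powi k)"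
proof
  assume z: "z \<noteq> 0" and "th z = 0"
  then consider "qpoch_inf z p = 0" | "qpoch_inf (p / z) p = 0" by (auto simp: theta_def)
  then show "\<exists>k::int. z = p powi k"
  proof cases
    case 1
    then obtain j where "z * p ^ j = 1" using qpoch_inf_eq_0_iff[OF norm_p_less_1] by auto
    then have "z = p powi (- int j)" using p_nonzero by (simp add: power_int_minus field_simps)
    then show ?thesis by blast
  next
    case 2
    then obtain j where "p / z * p ^ j = 1" using qpoch_inf_eq_0_iff[OF norm_p_less_1] by auto
    then have "z = p powi int (Suc j)" using p_nonzero z by (simp only: power_int_of_nat) (simp add: field_simps)
    then show ?thesis by blast
  qed
qed (use theta_zeros_power_int in auto)

lemma theta'_nonzero_at_zero: "z \<noteq> 0 \<Longrightarrow> th z = 0 \<Longrightarrow> theta' z \<noteq> 0"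
  using theta_eq_0_iff theta_zeros_power_int by auto

end

section \<open>Quotients of quasi-periodic functions\<close>

lemma eventually_neq_at_nonzero_deriv:
  fixes F :: "complex \<Rightarrow> complex"
  assumes "F holomorphic_on S" "open S" "x \<in> S" "deriv F x \<noteq> 0"
  shows "eventually (\<lambda>y. F y \<noteq> F x) (at x)"
proof -
  define F1 where "F1 = (\<lambda>y. if y = x then deriv F x else (F y - F x) / (y - x))"
  have "continuous_on S F1"
    unfolding F1_def by (intro holomorphic_on_imp_continuous_on pole_lemma_open assms)
  then have "isCont F1 x" using assms by (simp add: continuous_on_eq_continuous_at)
  moreover have "F1 x \<noteq> 0" using assms by (simp add: F1_def)
  ultimately have "eventually (\<lambda>y. F1 y \<noteq> 0) (at x)"
    using isCont_def tendsto_imp_eventually_ne by blast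
  moreover have "eventually (\<lambda>y. y \<noteq> x) (at x)" by (simp add: eventually_at_filter)
  ultimately show ?thesis by eventually_elim (auto simp: F1_def)
qed

lemma ball_avoiding_zero:
  fixes F :: "complex \<Rightarrow> complex"
  assumes "open S" "x \<in> S" "isCont F x" "F x \<noteq> 0"
  shows "\<exists>e>0. ball x e \<subseteq> S \<and> (\<forall>y\<in>ball x e. F y \<noteq> 0)"
proof -
  obtain e1 where e1: "e1 > 0" "\<And>y. dist x y < e1 \<Longrightarrow> F y \<noteq> 0"
    using continuous_at_avoid[OF assms(3,4)] by blast
  obtain e2 where e2: "e2 > 0" "ball x e2 \<subseteq> S" using assms(1,2) open_contains_ball by blast
  show ?thesis using e1 e2 by (intro exI[of _ "min e1 e2"]) auto
qed

text \<open>At a simple zero of \<open>F\<close> that is also a zero of \<open>E\<close>, the singularity of \<open>E / F\<close> is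
  removable, with value \<open>E' / F'\<close> by l'Hopital.\<close>
lemma holomorphic_quotient_at_simple_zeros:
  fixes E F :: "complex \<Rightarrow> complex"
  assumes hE: "E holomorphic_on S" and hF: "F holomorphic_on S" and S: "open S"
    and zeros: "\<And>w. w \<in> S \<Longrightarrow> F w = 0 \<Longrightarrow> E w = 0 \<and> deriv F w \<noteq> 0"
  shows "(\<lambda>y. if F y = 0 then deriv E y / deriv F y else E y / F y) holomorphic_on S"
    (is "?G holomorphic_on S")
proof -
  have "\<exists>e>0. ?G holomorphic_on ball x e" if x: "x \<in> S" for x
  proof (cases "F x = 0")
    case False
    have "isCont F x" using holomorphic_on_imp_continuous_on[OF hF] S x
      by (simp add: continuous_on_eq_continuous_at)
    from ball_avoiding_zero[OF S x this False] obtain e where e: "e > 0" "ball x e \<subseteq> S" "\<And>y. y \<in> ball x e \<Longrightarrow> F y \<noteq> 0"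
      by blast
    have "(\<lambda>y. E y / F y) holomorphic_on ball x e"
      using e by (intro holomorphic_on_divide holomorphic_on_subset[OF hE] holomorphic_on_subset[OF hF]) auto
    then have "?G holomorphic_on ball x e"
      by (rule holomorphic_transform) (simp add: e)
    then show ?thesis using e by blast
  next
    case True
    have Ex: "E x = 0" and dF: "deriv F x \<noteq> 0" using zeros[OF x True] by auto
    define F1 where "F1 = (\<lambda>y. if y = x then deriv F x else (F y - F x) / (y - x))"
    define E1 where "E1 = (\<lambda>y. if y = x then deriv E x else (E y - E x) / (y - x))"
    have hF1: "F1 holomorphic_on S" unfolding F1_def by (rule pole_lemma_open[OF hF S])
    have hE1: "E1 holomorphic_on S" unfolding E1_def by (rule pole_lemma_open[OF hE S])
    have "isCont F1 x" using holomorphic_on_imp_continuous_on[OF hF1] S x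
      by (simp add: continuous_on_eq_continuous_at)
    moreover have "F1 x \<noteq> 0" using dF by (simp add: F1_def)
    ultimately obtain e where e: "e > 0" "ball x e \<subseteq> S" "\<And>y. y \<in> ball x e \<Longrightarrow> F1 y \<noteq> 0"
      using ball_avoiding_zero[OF S x] by blast
    have "E1 y / F1 y = ?G y" if "y \<in> ball x e" for y
    proof (cases "y = x")
      case False
      have "F y = F1 y * (y - x)" "E y = E1 y * (y - x)" using False True Ex by (simp_all add: F1_def E1_def)
      then show ?thesis using e(3)[OF that] False by simp
    qed (use True in \<open>simp add: E1_def F1_def\<close>)
    moreover have "(\<lambda>y. E1 y / F1 y) holomorphic_on ball x e"
      using e by (intro holomorphic_on_divide holomorphic_on_subset[OF hE1] holomorphic_on_subset[OF hF1]) auto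
    ultimately have "?G holomorphic_on ball x e"
      using holomorphic_transform[of "\<lambda>y. E1 y / F1 y" "ball x e" ?G] by blast
    then show ?thesis using e by blast
  qed
  then have "?G analytic_on S" by (simp add: analytic_on_def)
  then show ?thesis by (rule analytic_imp_holomorphic)
qed

context theta_nome
begin

text \<open>Every orbit of \<open>y \<mapsto> p * y\<close> meets the compact annulus \<open>norm p \<le> norm y \<le> 1\<close>.\<close>
lemma bounded_on_p_invariant_set:
  assumes cG: "continuous_on (- {0}) G"
    and U: "\<And>y. y \<noteq> 0 \<Longrightarrow> p * y \<in> U \<longleftrightarrow> y \<in> U"
    and inv: "\<And>y. y \<noteq> 0 \<Longrightarrow> y \<in> U \<Longrightarrow> G (p * y) = G y"
  obtains M where "\<And>y. y \<noteq> 0 \<Longrightarrow> y \<in> U \<Longrightarrow> norm (G y) \<le> M"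
proof -
  define K where "K = {y :: complex. norm p \<le> norm y \<and> norm y \<le> 1}"
  have "K \<subseteq> - {0}" using p_nonzero by (auto simp: K_def)
  moreover have "compact K"
    unfolding K_def compact_eq_bounded_closed bounded_iff
    by (auto intro!: closed_Collect_conj closed_Collect_le continuous_intros)
  ultimately have "compact (G ` K)" using compact_continuous_image continuous_on_subset[OF cG] by blast
  then obtain M where M: "\<And>y. y \<in> K \<Longrightarrow> norm (G y) \<le> M"
    using compact_imp_bounded[of "G ` K"] unfolding bounded_iff by blast
  have np: "0 < norm p" "norm p < 1" using p_nonzero norm_p_less_1 by auto
  have up: "norm (G y) \<le> M"
    if "y \<noteq> 0" "y \<in> U" "norm p \<le> norm y" "norm y \<le> 1 / norm p ^ n" for n y
    using that
  proof (induction n arbitrary: y)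
    case (Suc n)
    show ?case
    proof (cases "norm y \<le> 1")
      case False
      have "norm (p * y) \<le> norm p * (1 / norm p ^ Suc n)"
        unfolding norm_mult using Suc.prems(4) np by (intro mult_left_mono) auto
      then have "norm (p * y) \<le> 1 / norm p ^ n" using np by (simp add: field_simps)
      moreover have "norm p \<le> norm (p * y)" using False np by (simp add: norm_mult)
      ultimately have "norm (G (p * y)) \<le> M" using Suc p_nonzero U by (intro Suc.IH) auto
      then show ?thesis using inv Suc.prems by simp
    qed (use M Suc.prems in \<open>auto simp: K_def\<close>)
  qed (use M in \<open>auto simp: K_def\<close>)
  have down: "norm (G y) \<le> M"
    if "y \<noteq> 0" "y \<in> U" "norm p ^ Suc n \<le> norm y" "norm y \<le> 1" for n y
    using that
  proof (induction n arbitrary: y)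
    case (Suc n)
    show ?case
    proof (cases "norm p \<le> norm y")
      case False
      define y' where "y' = y / p"
      have y': "y = p * y'" "y' \<noteq> 0" "norm y' = norm y / norm p"
        using p_nonzero Suc.prems by (simp_all add: y'_def norm_divide)
      then have "y' \<in> U" using U[OF y'(2)] Suc.prems(2) y'(1) by simp
      moreover have "norm p ^ Suc n \<le> norm y'" "norm y' \<le> 1"
        using Suc.prems(3) False np unfolding y'(3) by (simp_all add: field_simps)
      ultimately have "norm (G y') \<le> M" using y' by (intro Suc.IH) auto
      then show ?thesis using inv[OF y'(2) \<open>y' \<in> U\<close>] y' by simp
    qed (use M Suc.prems in \<open>auto simp: K_def\<close>)
  qed (use M in \<open>auto simp: K_def\<close>)
  show ?thesis
  proof (rule that)
    fix y assume y: "y \<noteq> 0" "y \<in> U"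
    show "norm (G y) \<le> M"
    proof (cases "norm p \<le> norm y")
      case True
      obtain n where "norm y < (1 / norm p) ^ n"
        using real_arch_pow[of "1 / norm p" "norm y"] np by (auto simp: field_simps)
      then show ?thesis using up[of y n] y True by (simp add: power_one_over)
    next
      case False
      obtain n where n: "norm p ^ n < norm y"
        using real_arch_pow_inv[of "norm y" "norm p"] np y by auto
      then obtain n' where "n = Suc n'" using False np by (cases n) auto
      then show ?thesis using down[of y n'] n False y np by auto
    qed
  qed
qed

text \<open>A Liouville argument: \<open>E / F\<close> extends to a holomorphic \<open>p\<close>-invariant function on
  \<open>\<complex> - {0}\<close>, hence is bounded and constant, and it vanishes at \<open>w1\<close>.\<close>
lemma quasi_periodic_quotient_vanishes:
  fixes E F m :: "complex \<Rightarrow> complex"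
  assumes hE: "E holomorphic_on (- {0})" and hF: "F holomorphic_on (- {0})"
    and perE: "\<And>w. w \<noteq> 0 \<Longrightarrow> E (p * w) = E w * m w"
    and perF: "\<And>w. w \<noteq> 0 \<Longrightarrow> F (p * w) = F w * m w"
    and m0: "\<And>w. w \<noteq> 0 \<Longrightarrow> m w \<noteq> 0"
    and zeros: "\<And>w. w \<noteq> 0 \<Longrightarrow> F w = 0 \<Longrightarrow> E w = 0 \<and> deriv F w \<noteq> 0"
    and w1: "w1 \<noteq> 0" "F w1 \<noteq> 0" "E w1 = 0"
    and w: "w \<noteq> 0"
  shows "E w = 0"
proof -
  define G where "G y = (if F y = 0 then deriv E y / deriv F y else E y / F y)" for y
  have hG: "G holomorphic_on (- {0})"
    unfolding G_def[abs_def]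
    by (rule holomorphic_quotient_at_simple_zeros[OF hE hF]) (use zeros in \<open>auto simp: open_Compl\<close>)
  then have cG: "continuous_on (- {0}) G" by (rule holomorphic_on_imp_continuous_on)
  have "G (p * y) = G y" if "y \<noteq> 0" "F y \<noteq> 0" for y
    using that perE perF m0 by (simp add: G_def)
  moreover have "p * y \<in> {y. F y \<noteq> 0} \<longleftrightarrow> y \<in> {y. F y \<noteq> 0}" if "y \<noteq> 0" for y
    using that perF m0 by simp
  ultimately obtain M where M: "\<And>y. y \<noteq> 0 \<Longrightarrow> y \<in> {y. F y \<noteq> 0} \<Longrightarrow> norm (G y) \<le> M"
    using bounded_on_p_invariant_set[OF cG, of "{y. F y \<noteq> 0}"] by auto
  have bound: "norm (G y) \<le> M" if y: "y \<noteq> 0" for y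
  proof (cases "F y = 0")
    case True
    have "eventually (\<lambda>z. z \<noteq> 0 \<and> F z \<noteq> 0) (at y)"
      using eventually_neq_at_nonzero_deriv[OF hF _ _ conjunct2[OF zeros[OF y True]]] y True
        eventually_at_in_open'[of "- {0}" y]
      by (auto simp: open_Compl elim: eventually_elim2)
    then have "eventually (\<lambda>z. norm (G z) \<le> M) (at y)"
      by (rule eventually_mono) (use M in auto)
    moreover have "(G \<longlongrightarrow> G y) (at y)"
      using cG y by (simp add: continuous_on_eq_continuous_at open_Compl isCont_def)
    ultimately show ?thesis by (intro Lim_norm_ubound[of "at y" G]) auto
  qed (use M y in auto)
  have "(\<lambda>t. G (exp t)) holomorphic_on UNIV"
    by (rule holomorphic_on_compose_gen[OF _ hG, unfolded o_def]) (auto intro: holomorphic_intros)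
  moreover have "bounded (range (\<lambda>t. G (exp t)))"
    unfolding bounded_iff using bound by (intro exI[of _ M]) auto
  ultimately have "(\<lambda>t. G (exp t)) constant_on UNIV" by (rule Liouville_theorem)
  then have "G (exp (Ln w)) = G (exp (Ln w1))" unfolding constant_on_def by auto
  then have "G w = 0" using w w1 by (simp add: G_def)
  then show ?thesis using zeros[OF w] by (auto simp: G_def split: if_splits)
qed

end

section \<open>The three-term theta identity\<close>

lemma islimpt_diff_countable:
  fixes S :: "complex set"
  assumes S: "open S" "x \<in> S" and C: "countable C"
  shows "x islimpt (S - C)"
  unfolding islimpt_def
proof (intro allI impI)
  fix T assume "x \<in> T" "open T"
  then obtain e where e: "e > 0" "ball x e \<subseteq> T \<inter> S"
    using S open_contains_ball[of "T \<inter> S"] by blast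
  define L where "L = (\<lambda>t::real. x + of_real t) ` {0<..<e}"
  have inj: "inj_on (\<lambda>t::real. x + of_real t) {0<..<e}" by (rule inj_onI) simp
  have "uncountable {0<..<e}" using e by (simp add: uncountable_open_interval)
  then have "uncountable L" unfolding L_def using countable_image_inj_on[OF _ inj] by blast
  then have "\<not> L \<subseteq> C" using C countable_subset by blast
  then obtain y where y: "y \<in> L" "y \<notin> C" by blast
  then obtain t where "t \<in> {0<..<e}" "y = x + of_real t" unfolding L_def by blast
  then have "y \<in> ball x e" "y \<noteq> x" by (simp_all add: dist_norm)
  then show "\<exists>y\<in>S - C. y \<in> T \<and> y \<noteq> x" using e y by blast
qed

lemma isCont_vanishing_at_limit_point:
  fixes f :: "complex \<Rightarrow> complex"
  assumes "isCont f x" "x islimpt U" "\<And>u. u \<in> U \<Longrightarrow> f u = 0"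
  shows "f x = 0"
proof -
  have "\<not> trivial_limit (at x within U)" using assms(2) by (simp add: trivial_limit_within)
  moreover have "(f \<longlongrightarrow> f x) (at x within U)"
    using assms(1) unfolding isCont_def by (rule tendsto_within_subset) simp
  moreover have "(f \<longlongrightarrow> 0) (at x within U)"
    using assms(3) by (intro tendsto_eventually) (auto simp: eventually_at_filter)
  ultimately show ?thesis by (rule tendsto_unique)
qed

context theta_nome
begin

lemma vanishing_along_p_orbit:
  fixes f m :: "complex \<Rightarrow> complex"
  assumes per: "\<And>w. w \<noteq> 0 \<Longrightarrow> f (p * w) = f w * m w" and m0: "\<And>w. w \<noteq> 0 \<Longrightarrow> m w \<noteq> 0"
    and v: "v \<noteq> 0"
  shows "f (p powi k * v) = 0 \<longleftrightarrow> f v = 0"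
proof -
  have pow: "f (p ^ n * u) = 0 \<longleftrightarrow> f u = 0" if "u \<noteq> 0" for n u
  proof (induction n)
    case (Suc n)
    have "p ^ n * u \<noteq> 0" using p_nonzero that by simp
    then show ?case using per m0 Suc by (simp add: mult.assoc)
  qed simp
  show ?thesis
  proof (cases "k \<ge> 0")
    case True
    then obtain n where "k = int n" by (intro that[of "nat k"]) simp
    then show ?thesis using pow[OF v, of n] by (simp add: power_int_of_nat)
  next
    case False
    then obtain n where k: "k = - int n" by (intro that[of "nat (- k)"]) simp
    have "p powi k * v \<noteq> 0" "p ^ n * (p powi k * v) = v"
      using p_nonzero v unfolding k by (simp_all add: power_int_minus field_simps)
    then show ?thesis using pow[of "p powi k * v" n] by metis
  qed
qed

definition theta_pair where "theta_pair c X w = th (c * w) * th (c / (X * w))"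

lemma theta_pair_p_shift:
  assumes "c \<noteq> 0" "X \<noteq> 0" "w \<noteq> 0"
  shows "theta_pair c X (p * w) = theta_pair c X w * (1 / (X * p * w\<^sup>2))"
proof -
  have a: "th (c * (p * w)) = - th (c * w) / (c * w)"
    using theta_shift_p_inverse(1)[of "c * w"] assms by (simp add: field_simps mult.left_commute)
  have "c / (X * (p * w)) = (c / (X * w)) / p" by (simp add: field_simps)
  then have b: "th (c / (X * (p * w))) = - (c / (X * w) / p) * th (c / (X * w))"
    using theta_div_p[of "c / (X * w)"] assms by (simp only:) simp
  show ?thesis unfolding theta_pair_def a b using assms p_nonzero by (simp add: field_simps power2_eq_square)
qed

lemma theta_pair_holomorphic: "c \<noteq> 0 \<Longrightarrow> X \<noteq> 0 \<Longrightarrow> theta_pair c X holomorphic_on (- {0})"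
  unfolding theta_pair_def[abs_def]
  by (intro holomorphic_on_mult holomorphic_on_compose_gen[OF _ theta_holomorphic, unfolded o_def])
     (auto intro!: holomorphic_intros)

lemma deriv_theta_pair:
  assumes c: "c \<noteq> 0" and X: "X \<noteq> 0" and w: "w \<noteq> 0"
  shows "deriv (theta_pair c X) w = theta' (c * w) * c * th (c / (X * w))
           + th (c * w) * (theta' (c / (X * w)) * (- c / (X * w\<^sup>2)))"
proof -
  have cw: "c * w \<noteq> 0" and cxw: "c / (X * w) \<noteq> 0" using c X w by auto
  have "((\<lambda>w. c * w) has_field_derivative c) (at w)"
    using DERIV_cmult[OF DERIV_ident, of c] by simp
  from DERIV_chain2[OF has_field_derivative_theta[OF cw] this]
  have e1: "((\<lambda>w. th (c * w)) has_field_derivative theta' (c * w) * c) (at w)" .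
  have "((\<lambda>w. c / (X * w)) has_field_derivative (- c / (X * w\<^sup>2))) (at w)"
    using X w by (auto intro!: derivative_eq_intros simp: power2_eq_square field_simps)
  from DERIV_chain2[OF has_field_derivative_theta[OF cxw] this]
  have e2: "((\<lambda>w. th (c / (X * w))) has_field_derivative
      theta' (c / (X * w)) * (- c / (X * w\<^sup>2))) (at w)" .
  from DERIV_mult[OF e1 e2] show ?thesis
    unfolding theta_pair_def[abs_def] by (intro DERIV_imp_deriv) (simp add: mult.commute)
qed

text \<open>The Weierstrass three-term identity for \<open>th\<close> reads \<open>theta_addition_defect c1 c2 c3 X w = 0\<close>;
  as a function of \<open>w\<close>, every \<open>theta_pair c X\<close> has the same multiplier under \<open>w \<mapsto> p * w\<close>.\<close>
definition theta_addition_defect where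
  "theta_addition_defect c1 c2 c3 X w = theta_pair c1 X w * (th (c2 * c3 / X) * th (c2 / c3))
     - theta_pair c2 X w * (th (c1 * c3 / X) * th (c1 / c3))
     + (c2 / c3) * theta_pair c3 X w * (th (c1 * c2 / X) * th (c1 / c2))"

lemma theta_addition_defect_p_shift:
  assumes "c1 \<noteq> 0" "c2 \<noteq> 0" "c3 \<noteq> 0" "X \<noteq> 0" "w \<noteq> 0"
  shows "theta_addition_defect c1 c2 c3 X (p * w)
           = theta_addition_defect c1 c2 c3 X w * (1 / (X * p * w\<^sup>2))"
  unfolding theta_addition_defect_def
  using theta_pair_p_shift[OF assms(1,4,5)] theta_pair_p_shift[OF assms(2,4,5)]
    theta_pair_p_shift[OF assms(3,4,5)]
  by (simp add: algebra_simps)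

lemma theta_addition_defect_holomorphic:
  "c1 \<noteq> 0 \<Longrightarrow> c2 \<noteq> 0 \<Longrightarrow> c3 \<noteq> 0 \<Longrightarrow> X \<noteq> 0 \<Longrightarrow>
    theta_addition_defect c1 c2 c3 X holomorphic_on (- {0})"
  unfolding theta_addition_defect_def[abs_def] by (intro holomorphic_intros theta_pair_holomorphic)

lemma theta_addition_defect_special_values:
  assumes c1: "c1 \<noteq> 0" and c2: "c2 \<noteq> 0" and c3: "c3 \<noteq> 0" and X: "X \<noteq> 0"
  shows "theta_addition_defect c1 c2 c3 X (1 / c1) = 0"
    and "theta_addition_defect c1 c2 c3 X (c1 / X) = 0"
    and "theta_addition_defect c1 c2 c3 X (1 / c2) = 0"
proof -
  have s12: "th (c2 / c1) = - (c2 / c1) * th (c1 / c2)" by (rule theta_swap[OF c1 c2])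
  have s13: "th (c3 / c1) = - (c3 / c1) * th (c1 / c3)" by (rule theta_swap[OF c1 c3])
  have s23: "th (c3 / c2) = - (c3 / c2) * th (c2 / c3)" by (rule theta_swap[OF c2 c3])
  have z: "theta_pair c1 X (1 / c1) = 0" "theta_pair c1 X (c1 / X) = 0" "theta_pair c2 X (1 / c2) = 0"
    unfolding theta_pair_def using c1 c2 X theta_1 by simp_all
  have v1: "theta_pair c2 X (1 / c1) = th (c2 / c1) * th (c1 * c2 / X)"
    "theta_pair c3 X (1 / c1) = th (c3 / c1) * th (c1 * c3 / X)"
    unfolding theta_pair_def using c1 by (simp_all add: field_simps)
  show "theta_addition_defect c1 c2 c3 X (1 / c1) = 0"
    unfolding theta_addition_defect_def z v1 s12 s13 using c1 c3 by (simp add: field_simps)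
  have v2: "theta_pair c2 X (c1 / X) = th (c1 * c2 / X) * th (c2 / c1)"
    "theta_pair c3 X (c1 / X) = th (c1 * c3 / X) * th (c3 / c1)"
    unfolding theta_pair_def using c1 X by (simp_all add: field_simps)
  show "theta_addition_defect c1 c2 c3 X (c1 / X) = 0"
    unfolding theta_addition_defect_def z v2 s12 s13 using c1 c3 by (simp add: field_simps)
  have v3: "theta_pair c1 X (1 / c2) = th (c1 / c2) * th (c1 * c2 / X)"
    "theta_pair c3 X (1 / c2) = th (c3 / c2) * th (c2 * c3 / X)"
    unfolding theta_pair_def using c2 by (simp_all add: field_simps)
  show "theta_addition_defect c1 c2 c3 X (1 / c2) = 0"
    unfolding theta_addition_defect_def z v3 s23 using c2 c3 by (simp add: field_simps)
qed

text \<open>If \<open>c1\<^sup>2\<close> avoids \<open>X p\<^sup>\<int>\<close>, the two factors of \<open>theta_pair c1 X\<close> never vanish simultaneously,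
  so its zeros are simple; each lies on the \<open>p\<close>-orbit of \<open>1 / c1\<close> or \<open>c1 / X\<close>.\<close>
lemma theta_pair_zeros:
  assumes c1: "c1 \<noteq> 0" and c2: "c2 \<noteq> 0" and c3: "c3 \<noteq> 0" and X: "X \<noteq> 0"
    and gen: "\<And>k. c1\<^sup>2 \<noteq> X * p powi k"
    and v: "v \<noteq> 0" and zero: "theta_pair c1 X v = 0"
  shows "theta_addition_defect c1 c2 c3 X v = 0 \<and> deriv (theta_pair c1 X) v \<noteq> 0"
proof -
  define m where "m w = 1 / (X * p * w\<^sup>2)" for w
  have orbit: "theta_addition_defect c1 c2 c3 X (p powi k * v0) = 0"
    if "v0 \<noteq> 0" "theta_addition_defect c1 c2 c3 X v0 = 0" for k v0
    using vanishing_along_p_orbit[of "theta_addition_defect c1 c2 c3 X" m]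
      theta_addition_defect_p_shift[OF c1 c2 c3 X] X p_nonzero that by (simp add: m_def)
  have cv: "c1 * v \<noteq> 0" and cxv: "c1 / (X * v) \<noteq> 0" using c1 X v by auto
  have not_both: False if A: "th (c1 * v) = 0" and B: "th (c1 / (X * v)) = 0"
  proof -
    obtain k j where "c1 * v = p powi k" "c1 / (X * v) = p powi j"
      using A B theta_eq_0_iff[OF cv] theta_eq_0_iff[OF cxv] by blast
    moreover have "c1\<^sup>2 = X * ((c1 * v) * (c1 / (X * v)))"
      using X v by (simp add: field_simps power2_eq_square)
    ultimately have "c1\<^sup>2 = X * p powi (k + j)" using p_nonzero by (simp add: power_int_add)
    then show False using gen by blast
  qed
  show ?thesis
  proof (cases "th (c1 * v) = 0")
    case True
    then have B: "th (c1 / (X * v)) \<noteq> 0" using not_both by blast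
    obtain k where "c1 * v = p powi k" using True theta_eq_0_iff[OF cv] by blast
    then have "v = p powi k * (1 / c1)" using c1 by (simp add: field_simps)
    moreover have "theta_addition_defect c1 c2 c3 X (p powi k * (1 / c1)) = 0"
      by (rule orbit) (use c1 theta_addition_defect_special_values(1)[OF c1 c2 c3 X] in auto)
    ultimately have "theta_addition_defect c1 c2 c3 X v = 0" by simp
    moreover have "deriv (theta_pair c1 X) v \<noteq> 0"
      unfolding deriv_theta_pair[OF c1 X v] using True B theta'_nonzero_at_zero[OF cv True] c1 by simp
    ultimately show ?thesis by simp
  next
    case False
    then have B: "th (c1 / (X * v)) = 0" using zero by (simp add: theta_pair_def)
    obtain j where "c1 / (X * v) = p powi j" using B theta_eq_0_iff[OF cxv] by blast
    then have "v = p powi (- j) * (c1 / X)" using c1 X v p_nonzero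
      by (simp add: power_int_minus field_simps)
    moreover have "theta_addition_defect c1 c2 c3 X (p powi (- j) * (c1 / X)) = 0"
      by (rule orbit) (use c1 X theta_addition_defect_special_values(2)[OF c1 c2 c3 X] in auto)
    ultimately have "theta_addition_defect c1 c2 c3 X v = 0" by simp
    moreover have "deriv (theta_pair c1 X) v \<noteq> 0"
      unfolding deriv_theta_pair[OF c1 X v]
      using False B theta'_nonzero_at_zero[OF cxv B] c1 X v by simp
    ultimately show ?thesis by simp
  qed
qed

lemma theta_addition_formula_generic:
  assumes c1: "c1 \<noteq> 0" and c2: "c2 \<noteq> 0" and c3: "c3 \<noteq> 0" and X: "X \<noteq> 0"
    and gen: "\<And>k. c1\<^sup>2 \<noteq> X * p powi k" "th (c1 / c2) \<noteq> 0" "th (c1 * c2 / X) \<noteq> 0"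
    and w: "w \<noteq> 0"
  shows "theta_addition_defect c1 c2 c3 X w = 0"
proof -
  define m where "m w = 1 / (X * p * w\<^sup>2)" for w
  have w1: "theta_pair c1 X (1 / c2) \<noteq> 0"
    unfolding theta_pair_def using c2 gen by (simp add: field_simps)
  show ?thesis
  proof (rule quasi_periodic_quotient_vanishes[of "theta_addition_defect c1 c2 c3 X" "theta_pair c1 X" m])
    fix v :: complex assume "v \<noteq> 0"
    then show "theta_addition_defect c1 c2 c3 X (p * v) = theta_addition_defect c1 c2 c3 X v * m v"
      and "theta_pair c1 X (p * v) = theta_pair c1 X v * m v" and "m v \<noteq> 0"
      using theta_addition_defect_p_shift[OF c1 c2 c3 X] theta_pair_p_shift[OF c1 X] X p_nonzero
      by (simp_all add: m_def)
  qed (use w1 theta_addition_defect_holomorphic[OF c1 c2 c3 X] theta_pair_holomorphic[OF c1 X]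
        theta_pair_zeros[OF c1 c2 c3 X gen(1)] theta_addition_defect_special_values(3)[OF c1 c2 c3 X]
        c2 w in simp_all)
qed

lemma countable_theta_zeros_scaled: "a \<noteq> 0 \<Longrightarrow> countable {c. c \<noteq> 0 \<and> th (c * a) = 0}"
proof -
  assume a: "a \<noteq> 0"
  have "{c. c \<noteq> 0 \<and> th (c * a) = 0} \<subseteq> range (\<lambda>k::int. p powi k / a)"
  proof
    fix c assume "c \<in> {c. c \<noteq> 0 \<and> th (c * a) = 0}"
    then obtain k where "c * a = p powi k" using theta_eq_0_iff[of "c * a"] a by auto
    then show "c \<in> range (\<lambda>k::int. p powi k / a)" using a by (auto simp: field_simps)
  qed
  then show ?thesis by (rule countable_subset) auto
qed

lemma countable_square_roots_orbit: "countable {c. \<exists>k::int. c\<^sup>2 = X * p powi k}"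
proof -
  have "{c. \<exists>k::int. c\<^sup>2 = X * p powi k} \<subseteq>
      range (\<lambda>k::int. csqrt (X * p powi k)) \<union> range (\<lambda>k::int. - csqrt (X * p powi k))"
  proof
    fix c assume "c \<in> {c. \<exists>k::int. c\<^sup>2 = X * p powi k}"
    then obtain k where "c\<^sup>2 = (csqrt (X * p powi k))\<^sup>2" by auto
    then have "c = csqrt (X * p powi k) \<or> c = - csqrt (X * p powi k)"
      using power2_eq_iff[of c "csqrt (X * p powi k)"] by simp
    then show "c \<in> range (\<lambda>k::int. csqrt (X * p powi k)) \<union> range (\<lambda>k::int. - csqrt (X * p powi k))"
      by blast
  qed
  then show ?thesis by (rule countable_subset) auto
qed

text \<open>The generic case extends to all \<open>c1\<close> by continuity, the exceptional \<open>c1\<close> being countable.\<close>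
lemma theta_addition_formula:
  assumes c1: "c1 \<noteq> 0" and c2: "c2 \<noteq> 0" and c3: "c3 \<noteq> 0" and X: "X \<noteq> 0" and w: "w \<noteq> 0"
  shows "theta_addition_defect c1 c2 c3 X w = 0"
proof -
  define C where "C = {c. \<exists>k::int. c\<^sup>2 = X * p powi k} \<union> {c. c \<noteq> 0 \<and> th (c * (1 / c2)) = 0}
     \<union> {c. c \<noteq> 0 \<and> th (c * (c2 / X)) = 0}"
  have "countable C"
    unfolding C_def using countable_square_roots_orbit[of X] countable_theta_zeros_scaled[of "1 / c2"]
      countable_theta_zeros_scaled[of "c2 / X"] c2 X by simp
  then have "c1 islimpt (- {0} - C)"
    by (intro islimpt_diff_countable) (use c1 in \<open>auto simp: open_Compl\<close>)
  moreover have "theta_addition_defect c c2 c3 X w = 0" if "c \<in> - {0} - C" for c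
    using that by (intro theta_addition_formula_generic c2 c3 X w) (auto simp: C_def)
  moreover have "isCont (\<lambda>c. theta_addition_defect c c2 c3 X w) c1"
  proof -
    have mult: "isCont (\<lambda>c. th (c * a)) c1" if "a \<noteq> 0" for a
      by (rule isCont_theta_compose) (use that c1 in \<open>auto intro!: continuous_intros\<close>)
    have "isCont (\<lambda>c. th (c / a)) c1" "isCont (\<lambda>c. th (c * a / b)) c1" if "a \<noteq> 0" "b \<noteq> 0" for a b
      using mult[of "1 / a"] mult[of "a / b"] that by (simp_all add: field_simps)
    then show ?thesis
      unfolding theta_addition_defect_def theta_pair_def
      by (intro continuous_intros mult) (use c2 c3 X w in auto)
  qed
  ultimately show ?thesis using isCont_vanishing_at_limit_point by blast
qed

end

section \<open>The elliptic summation\<close>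

lemma sum_atMost_Suc_Pascal_recurrence:
  fixes T T' U :: "nat \<Rightarrow> 'a::comm_semiring_1"
  assumes "T' 0 = c1 * T 0" and "\<And>j. j < m \<Longrightarrow> T' (Suc j) = c1 * T (Suc j) + c2 * U j"
    and "T' (Suc m) = c2 * U m"
  shows "(\<Sum>l\<le>Suc m. T' l) = c1 * (\<Sum>l\<le>m. T l) + c2 * (\<Sum>l\<le>m. U l)"
proof -
  have "(\<Sum>l\<le>Suc m. T' l) = T' 0 + (\<Sum>j<m. T' (Suc j)) + T' (Suc m)"
    unfolding sum.atMost_Suc_shift by (simp add: lessThan_Suc_atMost[symmetric] add.assoc)
  also have "\<dots> = c1 * (T 0 + (\<Sum>j<m. T (Suc j))) + c2 * ((\<Sum>j<m. U j) + U m)"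
    using assms by (simp add: sum.distrib sum_distrib_left algebra_simps)
  also have "\<dots> = c1 * (\<Sum>l\<le>m. T l) + c2 * (\<Sum>l\<le>m. U l)"
    unfolding lessThan_Suc_atMost[symmetric] sum.lessThan_Suc_shift[of T] sum.lessThan_Suc[of U] ..
  finally show ?thesis .
qed

locale elliptic_nome = theta_nome +
  fixes q :: complex
  assumes q_nonzero: "q \<noteq> 0"
begin

abbreviation ep where "ep z n \<equiv> epoch p q z n"
abbreviation Mc where "Mc n l a k \<equiv> Mcoef p q n l a k"
abbreviation Dc where "Dc l a b c \<equiv> Dcoef p q l a b c"

lemma epoch_0[simp]: "ep z 0 = 1" by (simp add: epoch_def)

lemma epoch_Suc: "ep z (Suc n) = ep z n * th (z * q ^ n)"
  by (simp add: epoch_def)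

lemma epoch_Suc_shift: "ep z (Suc n) = th z * ep (z * q) n"
  unfolding epoch_def prod.lessThan_Suc_shift by (simp add: mult.assoc)

lemma epoch_add: "ep z (a + b) = ep z a * ep (z * q ^ a) b"
  by (induction b) (simp_all add: epoch_Suc power_add mult.assoc)

lemma epoch_nonzero_le: "ep z n \<noteq> 0 \<Longrightarrow> m \<le> n \<Longrightarrow> ep z m \<noteq> 0"
  using epoch_add[of z m "n - m"] by auto

lemma epoch_nonzero_theta: "ep z n \<noteq> 0 \<Longrightarrow> i < n \<Longrightarrow> th (z * q ^ i) \<noteq> 0"
proof -
  assume a: "ep z n \<noteq> 0" and i: "i < n"
  obtain k where k: "n - i = Suc k" using i by (cases "n - i") auto
  have nn: "n = i + (n - i)" using i by simp
  have "ep z n = ep z i * ep (z * q ^ i) (n - i)" by (subst nn, rule epoch_add)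
  then have "ep z n = ep z i * ep (z * q ^ i) (Suc k)" using k by simp
  also have "\<dots> = ep z i * (th (z * q ^ i) * ep (z * q ^ i * q) k)" by (simp only: epoch_Suc_shift)
  finally show ?thesis using a by auto
qed

lemma epoch_Suc_Suc_shift: "ep z (Suc (Suc n)) = th z * th (z * q) * ep (z * q * q) n"
  by (simp add: epoch_Suc_shift mult.assoc)

lemma epoch_shift_nonzero_theta: "ep (q * z) n \<noteq> 0 \<Longrightarrow> 0 < i \<Longrightarrow> i \<le> n \<Longrightarrow> th (z * q ^ i) \<noteq> 0"
  using epoch_nonzero_theta[of "q * z" n "i - 1"] by (cases i) (simp_all add: mult_ac)

lemma theta_q_power_nonzero: "ep (q * z) n \<noteq> 0 \<Longrightarrow> i \<le> n \<Longrightarrow> th z \<noteq> 0 \<Longrightarrow> th (z * q ^ i) \<noteq> 0"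
  using epoch_shift_nonzero_theta[of z n i] by (cases i) simp_all

lemma Mcoef_col0: "Mc n 0 a k = ep k n * ep (k / a) n / (ep (q * a) n * ep q n) * (th a / th a) * a ^ n"
  by (simp add: Mcoef_def)

lemma Mcoef_le: "l \<le> n \<Longrightarrow> Mc n l a k = ep k (n + l) * ep (k / a) (n - l) / (ep (q * a) (n + l) * ep q (n - l))
    * (th (a * q ^ (2 * l)) / th a) * a ^ (n - l)"
  by (simp add: Mcoef_def)

lemma Mcoef_Suc_row:
  assumes lm: "l \<le> m" and nz: "ep (q * X) (Suc (m + l)) \<noteq> 0" "ep q (Suc (m - l)) \<noteq> 0" "th X \<noteq> 0"
  shows "Mc (Suc m) l X K * (th (q * X * q ^ (m + l)) * th (q * q ^ (m - l)))
       = Mc m l X K * (th (K * q ^ (m + l)) * th (K / X * q ^ (m - l))) * X"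
proof -
  have s1: "Suc m + l = Suc (m + l)" "Suc m - l = Suc (m - l)" using lm by auto
  have n1: "ep (q * X) (m + l) \<noteq> 0" "th (q * X * q ^ (m + l)) \<noteq> 0"
    using nz(1) by (auto simp: epoch_Suc)
  have n2: "ep q (m - l) \<noteq> 0" "th (q * q ^ (m - l)) \<noteq> 0"
    using nz(2) by (auto simp: epoch_Suc)
  show ?thesis
    unfolding Mcoef_def using lm s1 n1 n2 nz(3)
    by (simp add: epoch_Suc field_simps)
qed

lemma theta_addition_row:
  assumes lm: "l \<le> m" and X: "X \<noteq> 0" and K: "K \<noteq> 0"
  shows "th (K * q ^ (m + l)) * th (K / X * q ^ (m - l)) * (th (X * q ^ Suc m) * th (q ^ Suc m))
       = th (q * X * q ^ (m + l)) * th (q * q ^ (m - l)) * (th (K * q ^ m) * th (K / X * q ^ m))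
         + q ^ Suc m / q ^ l * (th (X * q ^ l) * th (q ^ l)) * (th (K * q ^ (2 * m + 1)) * th (K / (X * q)))"
proof -
  define c1 c2 w where "c1 = K * q ^ m" "c2 = X * q ^ Suc m" "w = q ^ l"
  have nz: "c1 \<noteq> 0" "c2 \<noteq> 0" "w \<noteq> 0" using X K q_nonzero by (auto simp: c1_c2_w_def)
  have af: "theta_addition_defect c1 c2 X X w = 0" by (rule theta_addition_formula[OF nz(1,2) X X nz(3)])
  have ql: "q ^ m = q ^ (m - l) * q ^ l" using lm by (simp add: power_add[symmetric])
  have e1: "theta_pair c1 X w = th (K * q ^ (m + l)) * th (K / X * q ^ (m - l))"
  proof -
    have "c1 * w = K * q ^ (m + l)" by (simp add: c1_c2_w_def power_add)
    moreover have "c1 / (X * w) = K / X * q ^ (m - l)" using q_nonzero X by (simp add: c1_c2_w_def ql field_simps)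
    ultimately show ?thesis by (simp add: theta_pair_def)
  qed
  have e2: "theta_pair c2 X w = th (q * X * q ^ (m + l)) * th (q * q ^ (m - l))"
  proof -
    have "c2 * w = q * X * q ^ (m + l)" by (simp add: c1_c2_w_def power_add)
    moreover have "c2 / (X * w) = q * q ^ (m - l)" using q_nonzero X by (simp add: c1_c2_w_def ql field_simps)
    ultimately show ?thesis by (simp add: theta_pair_def)
  qed
  have e3: "theta_pair X X w = - (th (X * q ^ l) * th (q ^ l)) / q ^ l"
  proof -
    have a: "X / (X * w) = 1 / q ^ l" using X by (simp add: c1_c2_w_def)
    have b: "th (1 / q ^ l) = - th (q ^ l) / q ^ l" using theta_inverse[of "q ^ l"] q_nonzero by (simp add: inverse_eq_divide)
    show ?thesis unfolding theta_pair_def a b by (simp add: c1_c2_w_def)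
  qed
  have a1: "c2 * X / X = X * q ^ Suc m" "c2 / X = q ^ Suc m" "c1 * X / X = K * q ^ m"
    "c1 / X = K / X * q ^ m" "c1 * c2 / X = K * q ^ (2 * m + 1)" "c1 / c2 = K / (X * q)"
  proof -
    have qq: "q ^ (2 * m + 1) = q ^ m * q ^ m * q" by (simp add: mult_2 power_add)
    show "c2 * X / X = X * q ^ Suc m" "c2 / X = q ^ Suc m" "c1 * X / X = K * q ^ m"
      "c1 / X = K / X * q ^ m" "c1 * c2 / X = K * q ^ (2 * m + 1)" "c1 / c2 = K / (X * q)"
      using X q_nonzero unfolding qq by (auto simp: c1_c2_w_def field_simps)
  qed
  from af show ?thesis unfolding theta_addition_defect_def e1 e2 e3 a1 using q_nonzero
    by (simp add: field_simps)
qed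

lemma Dcoef_Suc_shift:
  assumes B: "B \<noteq> 0" and C: "C \<noteq> 0" and X: "X \<noteq> 0"
    and nz: "ep (X * q / B) (Suc j) \<noteq> 0" "ep (X * q / C) (Suc j) \<noteq> 0"
  shows "Dc (Suc j) X B C * (th (X * q / B) * th (X * q / C))
       = Dc j (X * q\<^sup>2) (B * q) (C * q) * (th B * th C) * (X * q / (B * C))"
proof -
  have a1: "X * q\<^sup>2 * q / (B * q) = X * q / B * q" "X * q\<^sup>2 * q / (C * q) = X * q / C * q"
    "X * q\<^sup>2 * q / (B * q * (C * q)) = X * q / (B * C)"
    using q_nonzero B C by (auto simp: field_simps power2_eq_square)
  have n1: "th (X * q / B) \<noteq> 0" "ep (X * q / B * q) j \<noteq> 0" using nz(1) by (auto simp: epoch_Suc_shift)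
  have n2: "th (X * q / C) \<noteq> 0" "ep (X * q / C * q) j \<noteq> 0" using nz(2) by (auto simp: epoch_Suc_shift)
  show ?thesis
    unfolding Dcoef_def a1 epoch_Suc_shift[of B] epoch_Suc_shift[of C] epoch_Suc_shift[of "X * q / B"] epoch_Suc_shift[of "X * q / C"]
      power_Suc
    using n1 n2 by (simp add: field_simps)
qed

lemma Mcoef_col0_Suc_shift:
  assumes A: "A \<noteq> 0" and X: "X \<noteq> 0" and nz: "th A \<noteq> 0" "th (A * q) \<noteq> 0"
    "ep (q * A) (Suc j) \<noteq> 0" "ep q (Suc j) \<noteq> 0"
  shows "Mc (Suc j) 0 A X * (th (X * q ^ Suc j) * th (q * A) * th (q * q ^ j)) * q ^ j
       = Mc j 0 (A * q) (X * q\<^sup>2) * (th X * th (X * q) * th (X / A)) * A"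
proof -
  have a1: "X * q\<^sup>2 / (A * q) = X / A * q" "q * (A * q) = q * A * q" "X * q\<^sup>2 = X * q * q"
    using q_nonzero A by (auto simp: field_simps power2_eq_square)
  have e1: "ep X (Suc j) * th (X * q ^ Suc j) = th X * (th (X * q) * ep (X * q * q) j)"
    by (metis epoch_Suc epoch_Suc_shift)
  have n1: "th (q * A) \<noteq> 0" "ep (q * A * q) j \<noteq> 0" using nz(3) by (auto simp: epoch_Suc_shift)
  have n2: "ep q j \<noteq> 0" "th (q * q ^ j) \<noteq> 0" using nz(4) by (auto simp: epoch_Suc)
  have "Mc (Suc j) 0 A X * (th (X * q ^ Suc j) * th (q * A) * th (q * q ^ j)) * q ^ j
      = (ep X (Suc j) * th (X * q ^ Suc j)) * (th (X / A) * ep (X / A * q) j) / (th (q * A) * ep (q * A * q) j * (ep q j * th (q * q ^ j)))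
         * (th A / th A) * A ^ Suc j * (th (q * A) * th (q * q ^ j)) * q ^ j"
    unfolding Mcoef_col0 epoch_Suc_shift[of "X / A"] epoch_Suc_shift[of "q * A"] epoch_Suc[of q] by (simp add: field_simps)
  also have "\<dots> = th X * (th (X * q) * ep (X * q * q) j) * (th (X / A) * ep (X / A * q) j) / (th (q * A) * ep (q * A * q) j * (ep q j * th (q * q ^ j)))
         * (th A / th A) * A ^ Suc j * (th (q * A) * th (q * q ^ j)) * q ^ j"
    unfolding e1 ..
  also have "\<dots> = Mc j 0 (A * q) (X * q\<^sup>2) * (th X * th (X * q) * th (X / A)) * A"
    unfolding Mcoef_col0 a1 using nz(1,2) n1 n2 q_nonzero A by (simp add: field_simps)
  finally show ?thesis .
qed

lemma Mcoef_Suc_col_shift: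
  assumes jm: "Suc j \<le> m" and X: "X \<noteq> 0"
    and nz: "th X \<noteq> 0" "th (X * q\<^sup>2) \<noteq> 0" "ep (q * X) (Suc (Suc (m + j))) \<noteq> 0" "ep q (Suc (m - Suc j)) \<noteq> 0"
  shows "Mc m (Suc j) X K * (th (K / (X * q)) * th (q * X) * th X * X * q ^ (2 * (m - Suc j) + 2))
       = Mc m j (X * q\<^sup>2) (K * q) * (th K * th (q * X * q ^ (m + Suc j)) * th (q * q ^ (m - Suc j)))"
proof -
  define d where "d = m - Suc j"
  have md: "m - j = Suc d" "m + Suc j = Suc (m + j)" using jm by (auto simp: d_def)
  have a1: "K * q / (X * q\<^sup>2) = K / (X * q)" "K / (X * q) * q = K / X" "q * (X * q\<^sup>2) = q * X * q * q"
    "X * q\<^sup>2 * q ^ (2 * j) = X * q ^ (2 * Suc j)" "q * X * q = X * q\<^sup>2"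
    using q_nonzero X by (auto simp: field_simps power2_eq_square power_add)
  have e1: "ep (q * X) (Suc (m + j)) * th (q * X * q ^ Suc (m + j)) = th (q * X) * th (q * X * q) * ep (q * X * q * q) (m + j)"
    by (metis epoch_Suc_Suc_shift epoch_Suc)
  have n1a: "ep (q * X * q * q) (m + j) \<noteq> 0" "th (q * X) \<noteq> 0"
    using nz(3) unfolding epoch_Suc_Suc_shift by auto
  have n1b: "ep (q * X) (Suc (m + j)) \<noteq> 0" "th (q * X * q ^ Suc (m + j)) \<noteq> 0"
    using nz(3) unfolding epoch_Suc[of "q*X" "Suc (m+j)"] by auto
  note n1 = n1a n1b
  have n2: "ep q d \<noteq> 0" "th (q * q ^ d) \<noteq> 0" using nz(4) by (auto simp: epoch_Suc d_def)
  have L: "Mc m (Suc j) X K = th K * ep (K * q) (m + j) * ep (K / X) d / (ep (q * X) (Suc (m + j)) * ep q d)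
      * (th (X * q ^ (2 * Suc j)) / th X) * X ^ d"
    using jm by (simp add: Mcoef_le d_def epoch_Suc_shift)
  have R: "Mc m j (X * q\<^sup>2) (K * q) = ep (K * q) (m + j) * (th (K / (X * q)) * ep (K / X) d)
      / (ep (q * X * q * q) (m + j) * (ep q d * th (q * q ^ d)))
      * (th (X * q ^ (2 * Suc j)) / th (X * q\<^sup>2)) * (X * q\<^sup>2) ^ Suc d"
  proof -
    have "Mc m j (X * q\<^sup>2) (K * q) = ep (K * q) (m + j) * ep (K * q / (X * q\<^sup>2)) (m - j)
      / (ep (q * (X * q\<^sup>2)) (m + j) * ep q (m - j)) * (th (X * q\<^sup>2 * q ^ (2 * j)) / th (X * q\<^sup>2)) * (X * q\<^sup>2) ^ (m - j)"
      using jm by (intro Mcoef_le) simp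
    also have "\<dots> = ep (K * q) (m + j) * (th (K / (X * q)) * ep (K / X) d)
      / (ep (q * X * q * q) (m + j) * (ep q d * th (q * q ^ d)))
      * (th (X * q ^ (2 * Suc j)) / th (X * q\<^sup>2)) * (X * q\<^sup>2) ^ Suc d"
      unfolding md(1) a1 epoch_Suc_shift[of "K / (X * q)"] epoch_Suc[of q d] ..
    finally show ?thesis .
  qed
  have "Mc m (Suc j) X K * (th (K / (X * q)) * th (q * X) * th X * X * q ^ (2 * (m - Suc j) + 2))
     = th K * ep (K * q) (m + j) * ep (K / X) d / (ep (q * X) (Suc (m + j)) * th (q * X * q ^ Suc (m + j)) * ep q d)
      * (th (X * q ^ (2 * Suc j)) / th X) * X ^ d * (th (K / (X * q)) * th (q * X) * th X * X * q ^ (2 * d + 2))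
      * th (q * X * q ^ Suc (m + j))"
    unfolding L d_def[symmetric] using n1 by (simp add: field_simps)
  also have "\<dots> = th K * ep (K * q) (m + j) * ep (K / X) d / (th (q * X) * th (q * X * q) * ep (q * X * q * q) (m + j) * ep q d)
      * (th (X * q ^ (2 * Suc j)) / th X) * X ^ d * (th (K / (X * q)) * th (q * X) * th X * X * q ^ (2 * d + 2))
      * th (q * X * q ^ Suc (m + j))"
    unfolding e1 ..
  also have "\<dots> = Mc m j (X * q\<^sup>2) (K * q) * (th K * th (q * X * q ^ (m + Suc j)) * th (q * q ^ (m - Suc j)))"
  proof -
    have qd: "q ^ (2 * d + 2) = q ^ d * q ^ d * q * q" by (simp add: power_add mult_2 power2_eq_square)
    show ?thesis
    unfolding R md(2) d_def[symmetric] a1(5) qd using n1 n2 nz(1,2) q_nonzero X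
    by (simp add: field_simps power2_eq_square power_mult_distrib)
  qed
  finally show ?thesis .
qed

lemma Mcoef_diag_Suc_shift:
  assumes X: "X \<noteq> 0" and nz: "th X \<noteq> 0" "th (X * q\<^sup>2) \<noteq> 0" "ep (q * X) (Suc (Suc (m + m))) \<noteq> 0"
  shows "Mc (Suc m) (Suc m) X K * (th (q * X) * th X) = Mc m m (X * q\<^sup>2) (K * q) * (th K * th (K * q ^ (2 * m + 1)))"
proof -
  have a1: "q * (X * q\<^sup>2) = q * X * q * q" "X * q\<^sup>2 * q ^ (2 * m) = X * q ^ (2 * Suc m)" "q * X * q = X * q\<^sup>2"
    using q_nonzero X by (auto simp: field_simps power2_eq_square power_add)
  have a14: "K * q * q ^ (m + m) = K * q ^ (2 * m + 1)" by (simp add: mult_2)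
  note a1 = a1 a14
  have n1: "ep (q * X * q * q) (m + m) \<noteq> 0" "th (q * X) \<noteq> 0" "th (q * X * q) \<noteq> 0"
    using nz(3) unfolding epoch_Suc_Suc_shift by auto
  have L: "Mc (Suc m) (Suc m) X K = th K * (ep (K * q) (m + m) * th (K * q ^ (2 * m + 1)))
      / (th (q * X) * th (q * X * q) * ep (q * X * q * q) (m + m)) * (th (X * q ^ (2 * Suc m)) / th X)"
  proof -
    have "Mc (Suc m) (Suc m) X K = ep K (Suc (Suc (m + m))) / ep (q * X) (Suc (Suc (m + m))) * (th (X * q ^ (2 * Suc m)) / th X)"
      by (simp add: Mcoef_le)
    also have "\<dots> = th K * (ep (K * q) (m + m) * th (K * q * q ^ (m + m)))
      / (th (q * X) * th (q * X * q) * ep (q * X * q * q) (m + m)) * (th (X * q ^ (2 * Suc m)) / th X)"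
      unfolding epoch_Suc_Suc_shift[of "q * X"] epoch_Suc_shift[of K "Suc (m + m)"] epoch_Suc[of "K * q" "m + m"] by simp
    finally show ?thesis unfolding a1(4) .
  qed
  have R: "Mc m m (X * q\<^sup>2) (K * q) = ep (K * q) (m + m) / ep (q * X * q * q) (m + m) * (th (X * q ^ (2 * Suc m)) / th (X * q\<^sup>2))"
    by (simp add: Mcoef_le a1(1,2))
  show ?thesis unfolding L R using n1 nz(1,2) unfolding a1(3) by (simp add: field_simps)
qed

text \<open>\<open>braid_summand X A K B C n l\<close> is the \<open>l\<close>-th term of the \<open>(n, 0)\<close> entry of
  \<open>M(X, K) D(X; B, C) M(A, X)\<close>, and \<open>braid_rhs X A K B C n\<close> is the \<open>(n, 0)\<close> entry of
  \<open>D(K; BK/X, CK/X) M(A, K)\<close>. Via the three-term identity, both satisfy the same recurrence in \<open>n\<close>,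
  with coefficients \<open>braid_coeff1\<close> and \<open>braid_coeff2\<close>; the second multiplies the quantity with
  \<open>(X, A, K, B, C)\<close> shifted to \<open>(X q\<^sup>2, A q, K q, B q, C q)\<close>.\<close>
definition braid_summand where "braid_summand X A K B C n l = Mc n l X K * Dc l X B C * Mc l 0 A X"

definition braid_coeff1 where "braid_coeff1 X K m = X * (th (K * q ^ m) * th (K / X * q ^ m)) / (th (X * q ^ Suc m) * th (q ^ Suc m))"

definition braid_coeff2 where "braid_coeff2 X A K B C m = K / q ^ m * th (K * q ^ (2 * m + 1)) * th K * th B * th C * th (X / A)
   / (th (X * q ^ Suc m) * th (q ^ Suc m) * th (X * q / B) * th (X * q / C) * th (q * A))"

definition braid_generic where "braid_generic X A B C n \<longleftrightarrow> th X \<noteq> 0 \<and> th A \<noteq> 0 \<and> ep (q * X) (2 * n) \<noteq> 0 \<and> ep q n \<noteq> 0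
   \<and> ep (X * q / B) n \<noteq> 0 \<and> ep (X * q / C) n \<noteq> 0 \<and> ep (q * A) n \<noteq> 0"

lemma braid_generic_nonzero:
  assumes "braid_generic X A B C (Suc m)"
  shows "th X \<noteq> 0" "th A \<noteq> 0" "th (X * q) \<noteq> 0" "th (X * q\<^sup>2) \<noteq> 0" "th (q * A) \<noteq> 0"
    "th (X * q / B) \<noteq> 0" "th (X * q / C) \<noteq> 0" "th (X * q ^ Suc m) \<noteq> 0" "th (q ^ Suc m) \<noteq> 0"
proof -
  have G: "th X \<noteq> 0" "th A \<noteq> 0" "ep (q * X) (2 * Suc m) \<noteq> 0" "ep q (Suc m) \<noteq> 0"
    "ep (X * q / B) (Suc m) \<noteq> 0" "ep (X * q / C) (Suc m) \<noteq> 0" "ep (q * A) (Suc m) \<noteq> 0"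
    using assms by (auto simp: braid_generic_def)
  show "th X \<noteq> 0" "th A \<noteq> 0" by (fact G)+
  show "th (X * q) \<noteq> 0" "th (X * q\<^sup>2) \<noteq> 0" "th (X * q ^ Suc m) \<noteq> 0"
    using epoch_shift_nonzero_theta[OF G(3), of 1] epoch_shift_nonzero_theta[OF G(3), of 2]
      epoch_shift_nonzero_theta[OF G(3), of "Suc m"] by simp_all
  show "th (q * A) \<noteq> 0" using epoch_shift_nonzero_theta[OF G(7), of 1] by (simp add: mult.commute)
  show "th (q ^ Suc m) \<noteq> 0" using epoch_shift_nonzero_theta[of 1 "Suc m" "Suc m"] G(4) by simp
  show "th (X * q / B) \<noteq> 0" "th (X * q / C) \<noteq> 0"
    using epoch_nonzero_theta[OF G(5), of 0] epoch_nonzero_theta[OF G(6), of 0] by simp_all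
qed

lemma braid_generic_mono: "braid_generic X A B C n \<Longrightarrow> m \<le> n \<Longrightarrow> braid_generic X A B C m"
  unfolding braid_generic_def using epoch_nonzero_le by (meson mult_le_mono2)

lemma braid_summand_Suc_Suc:
  assumes jm: "Suc j \<le> m" and X: "X \<noteq> 0" and A: "A \<noteq> 0" and K: "K \<noteq> 0" and B: "B \<noteq> 0" and C: "C \<noteq> 0"
    and rel: "B * C * K = q * X * A" and G: "braid_generic X A B C (Suc m)"
  shows "braid_summand X A K B C (Suc m) (Suc j) = braid_coeff1 X K m * braid_summand X A K B C m (Suc j)
           + braid_coeff2 X A K B C m * braid_summand (X * q\<^sup>2) (A * q) (K * q) (B * q) (C * q) m j"
proof -
  obtain d where m: "m = Suc (j + d)" using le_Suc_ex[OF jm] by auto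
  have md: "m - Suc j = d" using m by simp
  define McN where "McN = Mc (Suc m) (Suc j) X K"
  define McM where "McM = Mc m (Suc j) X K"
  define McP where "McP = Mc m j (X * q\<^sup>2) (K * q)"
  define DD where "DD = Dc (Suc j) X B C"
  define DDp where "DDp = Dc j (X * q\<^sup>2) (B * q) (C * q)"
  define MM where "MM = Mc (Suc j) 0 A X"
  define MMp where "MMp = Mc j 0 (A * q) (X * q\<^sup>2)"
  define g where "g = th (q * X * q ^ (m + Suc j)) * th (q * q ^ (m - Suc j))"
  define f where "f = th (K * q ^ (m + Suc j)) * th (K / X * q ^ (m - Suc j))"
  define a where "a = th (X * q ^ Suc m) * th (q ^ Suc m)"
  define c where "c = th (K * q ^ m) * th (K / X * q ^ m)"
  define h where "h = th (X * q ^ Suc j) * th (q ^ Suc j)"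
  define k where "k = th (K * q ^ (2 * m + 1)) * th (K / (X * q))"
  have Gs: "th X \<noteq> 0" "th A \<noteq> 0" "ep (q * X) (2 * Suc m) \<noteq> 0" "ep q (Suc m) \<noteq> 0"
    "ep (X * q / B) (Suc m) \<noteq> 0" "ep (X * q / C) (Suc m) \<noteq> 0" "ep (q * A) (Suc m) \<noteq> 0"
    using G by (auto simp: braid_generic_def)
  have r1: "McN * g = McM * f * X"
    unfolding McN_def McM_def g_def f_def
  proof (rule Mcoef_Suc_row)
    show "Suc j \<le> m" by (rule jm)
    show "ep (q * X) (Suc (m + Suc j)) \<noteq> 0" using epoch_nonzero_le[OF Gs(3)] jm by simp
    show "ep q (Suc (m - Suc j)) \<noteq> 0" using epoch_nonzero_le[OF Gs(4)] jm by simp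
    show "th X \<noteq> 0" by (rule Gs(1))
  qed
  have af: "f * a = g * c + q ^ Suc m / q ^ Suc j * h * k"
    unfolding f_def a_def g_def c_def h_def k_def using theta_addition_row[OF _ X K, of "Suc j" m] jm by simp
  have thXq2: "th (X * q\<^sup>2) \<noteq> 0" using braid_generic_nonzero[OF G] by simp
  have thXq: "th (X * q) \<noteq> 0" using braid_generic_nonzero[OF G] by simp
  have thqA: "th (q * A) \<noteq> 0" using braid_generic_nonzero[OF G] by simp
  have thAq: "th (A * q) \<noteq> 0" using thqA by (simp add: mult.commute)
  have f1: "McM * (th (K / (X * q)) * th (q * X) * th X * X * q ^ (2 * (m - Suc j) + 2)) = McP * (th K * g)"
    unfolding McM_def McP_def g_def using Mcoef_Suc_col_shift[OF jm X Gs(1) thXq2] epoch_nonzero_le[OF Gs(3)] epoch_nonzero_le[OF Gs(4)] jm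
    by (simp add: mult.assoc)
  have f2: "DD * (th (X * q / B) * th (X * q / C)) = DDp * (th B * th C) * (X * q / (B * C))"
    unfolding DD_def DDp_def using Dcoef_Suc_shift[OF B C X] epoch_nonzero_le[OF Gs(5)] epoch_nonzero_le[OF Gs(6)] jm by simp
  have f3: "MM * (th (X * q ^ Suc j) * th (q * A) * th (q * q ^ j)) * q ^ j = MMp * (th X * th (X * q) * th (X / A)) * A"
    unfolding MM_def MMp_def using Mcoef_col0_Suc_shift[OF A X Gs(2) thAq] epoch_nonzero_le[OF Gs(7)] epoch_nonzero_le[OF Gs(4)] jm by simp
  have gnz: "g \<noteq> 0"
  proof -
    have "th (X * q ^ (Suc (m + Suc j))) \<noteq> 0" using epoch_shift_nonzero_theta[OF Gs(3), of "Suc (m + Suc j)"] jm by simp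
    moreover have "th (q ^ Suc (m - Suc j)) \<noteq> 0" using epoch_shift_nonzero_theta[of 1 "Suc m" "Suc (m - Suc j)"] Gs(4) jm by simp
    ultimately show ?thesis unfolding g_def by (simp add: mult_ac)
  qed
  have anz: "a \<noteq> 0" unfolding a_def using braid_generic_nonzero[OF G] by simp
  have nzB: "th (X * q / B) \<noteq> 0" using braid_generic_nonzero[OF G] by simp
  have nzC: "th (X * q / C) \<noteq> 0" using braid_generic_nonzero[OF G] by simp
  have kk: "X * q / (B * C) = K / A" using rel B C A by (simp add: field_simps)
  have thqX: "th (q * X) = th (X * q)" by (simp add: mult.commute)
  have T1: "braid_summand X A K B C (Suc m) (Suc j) = McN * DD * MM" by (simp add: braid_summand_def McN_def DD_def MM_def)
  have T2: "braid_summand X A K B C m (Suc j) = McM * DD * MM" by (simp add: braid_summand_def McM_def DD_def MM_def)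
  have T3: "braid_summand (X * q\<^sup>2) (A * q) (K * q) (B * q) (C * q) m j = McP * DDp * MMp"
    by (simp add: braid_summand_def McP_def DDp_def MMp_def)
  have qm: "q ^ m \<noteq> 0" using q_nonzero by simp
  have XBC: "X * q / (B * C) \<noteq> 0" using X B C q_nonzero by simp
  have s3: "braid_coeff2 X A K B C m * (McP * DDp * MMp) =
      K / q ^ m * th (K * q ^ (2 * m + 1)) / (a * th (X * q / B) * th (X * q / C) * th (q * A))
      * ((McP * (th K * g)) * (DDp * (th B * th C) * (X * q / (B * C))) * (MMp * (th X * th (X * q) * th (X / A)) * A))
      / (g * (X * q / (B * C)) * th X * th (X * q) * A)"
    unfolding braid_coeff2_def a_def[symmetric] using gnz anz nzB nzC thqA Gs(1) thXq A XBC qm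
    by (simp add: field_simps)
  have s4: "braid_coeff2 X A K B C m * (McP * DDp * MMp) =
      K / q ^ m * th (K * q ^ (2 * m + 1)) / (a * th (X * q / B) * th (X * q / C) * th (q * A))
      * ((McM * (th (K / (X * q)) * th (q * X) * th X * X * q ^ (2 * (m - Suc j) + 2)))
         * (DD * (th (X * q / B) * th (X * q / C)))
         * (MM * (th (X * q ^ Suc j) * th (q * A) * th (q * q ^ j)) * q ^ j))
      / (g * (X * q / (B * C)) * th X * th (X * q) * A)"
    unfolding s3 f1[symmetric] f2[symmetric] f3[symmetric] ..
  have s1: "McN = McM * f * X / g" using r1 gnz by (simp add: field_simps)
  have s2: "f = (g * c + q ^ Suc m / q ^ Suc j * h * k) / a" using af anz by (simp add: field_simps)
  have pw: "q ^ Suc m = q ^ Suc j * q ^ Suc d" "q ^ (2 * (m - Suc j) + 2) = q ^ Suc d * q ^ Suc d"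
    "q ^ m = q ^ j * q ^ Suc d"
    using m by (simp_all add: power_add[symmetric] mult_2)
  show ?thesis
    unfolding T1 T2 T3 s4 s1 s2 braid_coeff1_def
    unfolding c_def[symmetric] a_def[symmetric]
    unfolding kk thqX pw h_def k_def
    using gnz anz nzB nzC thqA Gs(1) thXq A X K qm q_nonzero
    by (simp add: field_simps)
qed

lemma braid_summand_Suc_0:
  assumes X: "X \<noteq> 0" and K: "K \<noteq> 0" and G: "braid_generic X A B C (Suc m)"
  shows "braid_summand X A K B C (Suc m) 0 = braid_coeff1 X K m * braid_summand X A K B C m 0"
proof -
  have Gs: "th X \<noteq> 0" "ep (q * X) (2 * Suc m) \<noteq> 0" "ep q (Suc m) \<noteq> 0"
    using G by (auto simp: braid_generic_def)
  have r1: "Mc (Suc m) 0 X K * (th (q * X * q ^ (m + 0)) * th (q * q ^ (m - 0)))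
       = Mc m 0 X K * (th (K * q ^ (m + 0)) * th (K / X * q ^ (m - 0))) * X"
  proof (rule Mcoef_Suc_row)
    show "ep (q * X) (Suc (m + 0)) \<noteq> 0" using epoch_nonzero_le[OF Gs(2)] by simp
    show "ep q (Suc (m - 0)) \<noteq> 0" using Gs(3) by simp
  qed (use Gs in auto)
  have af: "th (K * q ^ (m + 0)) * th (K / X * q ^ (m - 0)) * (th (X * q ^ Suc m) * th (q ^ Suc m))
       = th (q * X * q ^ (m + 0)) * th (q * q ^ (m - 0)) * (th (K * q ^ m) * th (K / X * q ^ m))
         + q ^ Suc m / q ^ 0 * (th (X * q ^ 0) * th (q ^ 0)) * (th (K * q ^ (2 * m + 1)) * th (K / (X * q)))"
    by (rule theta_addition_row[OF _ X K]) simp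
  have g1: "th (X * q ^ Suc m) \<noteq> 0" using braid_generic_nonzero[OF G] by simp
  have g2: "th (q ^ Suc m) \<noteq> 0" using braid_generic_nonzero[OF G] by simp
  have e: "q * X * q ^ m = X * q ^ Suc m" "q * q ^ m = q ^ Suc m" by simp_all
  show ?thesis
    using r1 af g1 g2 theta_1 unfolding braid_summand_def braid_coeff1_def e
    by (simp add: field_simps)
qed

lemma braid_summand_Suc_diag:
  assumes X: "X \<noteq> 0" and A: "A \<noteq> 0" and K: "K \<noteq> 0" and B: "B \<noteq> 0" and C: "C \<noteq> 0"
    and rel: "B * C * K = q * X * A" and G: "braid_generic X A B C (Suc m)"
  shows "braid_summand X A K B C (Suc m) (Suc m) = braid_coeff2 X A K B C m * braid_summand (X * q\<^sup>2) (A * q) (K * q) (B * q) (C * q) m m"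
proof -
  have Gs: "th X \<noteq> 0" "th A \<noteq> 0" "ep (q * X) (2 * Suc m) \<noteq> 0" "ep q (Suc m) \<noteq> 0"
    "ep (X * q / B) (Suc m) \<noteq> 0" "ep (X * q / C) (Suc m) \<noteq> 0" "ep (q * A) (Suc m) \<noteq> 0"
    using G by (auto simp: braid_generic_def)
  define McN where "McN = Mc (Suc m) (Suc m) X K"
  define McP where "McP = Mc m m (X * q\<^sup>2) (K * q)"
  define DD where "DD = Dc (Suc m) X B C"
  define DDp where "DDp = Dc m (X * q\<^sup>2) (B * q) (C * q)"
  define MM where "MM = Mc (Suc m) 0 A X"
  define MMp where "MMp = Mc m 0 (A * q) (X * q\<^sup>2)"
  have thXq2: "th (X * q\<^sup>2) \<noteq> 0" using braid_generic_nonzero[OF G] by simp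
  have thXq: "th (X * q) \<noteq> 0" using braid_generic_nonzero[OF G] by simp
  have thqA: "th (q * A) \<noteq> 0" using braid_generic_nonzero[OF G] by simp
  have thAq: "th (A * q) \<noteq> 0" using thqA by (simp add: mult.commute)
  have f1: "McN * (th (q * X) * th X) = McP * (th K * th (K * q ^ (2 * m + 1)))"
  proof -
    have "ep (q * X) (Suc (Suc (m + m))) \<noteq> 0" using Gs(3) by (simp add: mult_2)
    then show ?thesis unfolding McN_def McP_def using Mcoef_diag_Suc_shift[OF X Gs(1) thXq2] by blast
  qed
  have f2: "DD * (th (X * q / B) * th (X * q / C)) = DDp * (th B * th C) * (X * q / (B * C))"
    unfolding DD_def DDp_def using Dcoef_Suc_shift[OF B C X] Gs(5,6) by simp
  have f3: "MM * (th (X * q ^ Suc m) * th (q * A) * th (q * q ^ m)) * q ^ m = MMp * (th X * th (X * q) * th (X / A)) * A"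
    unfolding MM_def MMp_def using Mcoef_col0_Suc_shift[OF A X Gs(2) thAq] Gs(7,4) by simp
  have nzB: "th (X * q / B) \<noteq> 0" using braid_generic_nonzero[OF G] by simp
  have nzC: "th (X * q / C) \<noteq> 0" using braid_generic_nonzero[OF G] by simp
  have g1: "th (X * q ^ Suc m) \<noteq> 0" using braid_generic_nonzero[OF G] by simp
  have g2: "th (q ^ Suc m) \<noteq> 0" using braid_generic_nonzero[OF G] by simp
  have kk: "X * q / (B * C) = K / A" using rel B C A by (simp add: field_simps)
  have thqX: "th (q * X) = th (X * q)" by (simp add: mult.commute)
  have qm: "q ^ m \<noteq> 0" using q_nonzero by simp
  have XBC: "X * q / (B * C) \<noteq> 0" using X B C q_nonzero by simp
  have T1: "braid_summand X A K B C (Suc m) (Suc m) = McN * DD * MM" by (simp add: braid_summand_def McN_def DD_def MM_def)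
  have T3: "braid_summand (X * q\<^sup>2) (A * q) (K * q) (B * q) (C * q) m m = McP * DDp * MMp"
    by (simp add: braid_summand_def McP_def DDp_def MMp_def)
  have s3: "braid_coeff2 X A K B C m * (McP * DDp * MMp) =
      K / q ^ m / (th (X * q ^ Suc m) * th (q ^ Suc m) * th (X * q / B) * th (X * q / C) * th (q * A))
      * ((McP * (th K * th (K * q ^ (2 * m + 1)))) * (DDp * (th B * th C) * (X * q / (B * C))) * (MMp * (th X * th (X * q) * th (X / A)) * A))
      / ((X * q / (B * C)) * th X * th (X * q) * A)"
    unfolding braid_coeff2_def using g1 g2 nzB nzC thqA Gs(1) thXq A XBC qm
    by (simp add: field_simps)
  have s4: "braid_coeff2 X A K B C m * (McP * DDp * MMp) =
      K / q ^ m / (th (X * q ^ Suc m) * th (q ^ Suc m) * th (X * q / B) * th (X * q / C) * th (q * A))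
      * ((McN * (th (q * X) * th X)) * (DD * (th (X * q / B) * th (X * q / C)))
        * (MM * (th (X * q ^ Suc m) * th (q * A) * th (q * q ^ m)) * q ^ m))
      / ((X * q / (B * C)) * th X * th (X * q) * A)"
    unfolding s3 f1[symmetric] f2[symmetric] f3[symmetric] ..
  show ?thesis
    unfolding T1 T3 s4 kk thqX using nzB nzC g1 g2 thqA Gs(1) thXq A K q_nonzero qm
    by (simp add: field_simps)
qed

definition braid_rhs where "braid_rhs X A K B C n = Dc n K (B * K / X) (C * K / X) * Mc n 0 A K"

lemma braid_rhs_eq:
  assumes X: "X \<noteq> 0" and A: "A \<noteq> 0" and K: "K \<noteq> 0" and B: "B \<noteq> 0" and C: "C \<noteq> 0"
    and rel: "B * C * K = q * X * A" and tA: "th A \<noteq> 0"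
  shows "braid_rhs X A K B C n = ep (B * K / X) n * ep (C * K / X) n * ep K n * ep (K / A) n
      / (ep (X * q / B) n * ep (X * q / C) n * ep (q * A) n * ep q n) * X ^ n"
proof -
  have a: "K * q / (B * K / X) = X * q / B" "K * q / (C * K / X) = X * q / C" using K B C X by auto
  have b: "K * q / (B * K / X * (C * K / X)) = X / A"
  proof -
    have "K * q / (B * K / X * (C * K / X)) = X * X * q / (B * C * K)" using K B C X by (simp add: field_simps)
    also have "\<dots> = X / A" unfolding rel using X A q_nonzero by (simp add: field_simps)
    finally show ?thesis .
  qed
  show ?thesis unfolding braid_rhs_def Dcoef_def Mcoef_col0 a b using tA A by (simp add: field_simps power_divide)
qed

lemma theta_addition_rhs:
  assumes X: "X \<noteq> 0" and A: "A \<noteq> 0" and K: "K \<noteq> 0" and B: "B \<noteq> 0" and C: "C \<noteq> 0"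
    and rel: "B * C * K = q * X * A"
  shows "X * (th (B * K / X * q ^ m) * th (C * K / X * q ^ m) * th (K / A * q ^ m) * th (X * q ^ Suc m))
    = X * (th (K / X * q ^ m) * th (X * q / B * q ^ m) * th (X * q / C * q ^ m) * th (q * A * q ^ m))
      + K * q ^ m * (th (K * q ^ (2 * m + 1)) * th B * th C * th (X / A))"
proof -
  define c1 c2 Y where "c1 = K * q ^ m / X" "c2 = K * q ^ m / A" "Y = K / (q * X * A)"
  have nz: "c1 \<noteq> 0" "c2 \<noteq> 0" "Y \<noteq> 0" using X A K q_nonzero by (auto simp: c1_c2_Y_def)
  have af: "theta_addition_defect c1 c2 1 Y B = 0" by (rule theta_addition_formula[OF nz(1,2) _ nz(3) B]) simp
  have Cv: "C = q * X * A / (B * K)" using rel B K by (simp add: field_simps)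
  have e1: "theta_pair c1 Y B = th (B * K / X * q ^ m) * th (C * K / X * q ^ m)"
  proof -
    have "c1 * B = B * K / X * q ^ m" by (simp add: c1_c2_Y_def)
    moreover have "c1 / (Y * B) = C * K / X * q ^ m" using X A K B q_nonzero unfolding Cv by (simp add: c1_c2_Y_def field_simps)
    ultimately show ?thesis by (simp add: theta_pair_def)
  qed
  have e2: "theta_pair c2 Y B = th (X * q / C * q ^ m) * th (X * q / B * q ^ m)"
  proof -
    have "c2 * B = X * q / C * q ^ m" using X A K B q_nonzero unfolding Cv by (simp add: c1_c2_Y_def field_simps)
    moreover have "c2 / (Y * B) = X * q / B * q ^ m" using X A K B q_nonzero by (simp add: c1_c2_Y_def field_simps)
    ultimately show ?thesis by (simp add: theta_pair_def)
  qed
  have e3: "theta_pair 1 Y B = th B * th C"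
  proof -
    have "1 / (Y * B) = C" using X A K B q_nonzero unfolding Cv by (simp add: c1_c2_Y_def field_simps)
    then show ?thesis by (simp add: theta_pair_def)
  qed
  have qq: "q ^ (2 * m + 1) = q ^ m * q ^ m * q" by (simp add: mult_2 power_add)
  have a1: "c2 * 1 / Y = X * q ^ Suc m" "c2 / 1 = K / A * q ^ m" "c1 * 1 / Y = q * A * q ^ m"
    "c1 / 1 = K / X * q ^ m" "c1 * c2 / Y = K * q ^ (2 * m + 1)" "c1 / c2 = A / X"
    using X A K q_nonzero unfolding qq by (auto simp: c1_c2_Y_def field_simps)
  have s: "th (A / X) = - (A / X) * th (X / A)" by (rule theta_swap[OF X A])
  from af show ?thesis unfolding theta_addition_defect_def e1 e2 e3 a1 s using X A q_nonzero
    by (simp add: field_simps c1_c2_Y_def)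
qed

lemma braid_rhs_Suc:
  assumes X: "X \<noteq> 0" and A: "A \<noteq> 0" and K: "K \<noteq> 0" and B: "B \<noteq> 0" and C: "C \<noteq> 0"
    and rel: "B * C * K = q * X * A" and G: "braid_generic X A B C (Suc m)"
  shows "braid_rhs X A K B C (Suc m) = braid_coeff1 X K m * braid_rhs X A K B C m
           + braid_coeff2 X A K B C m * braid_rhs (X * q\<^sup>2) (A * q) (K * q) (B * q) (C * q) m"
proof -
  have Gs: "th X \<noteq> 0" "th A \<noteq> 0" "ep (q * X) (2 * Suc m) \<noteq> 0" "ep q (Suc m) \<noteq> 0"
    "ep (X * q / B) (Suc m) \<noteq> 0" "ep (X * q / C) (Suc m) \<noteq> 0" "ep (q * A) (Suc m) \<noteq> 0"
    using G by (auto simp: braid_generic_def)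
  have thqA: "th (q * A) \<noteq> 0" using braid_generic_nonzero[OF G] by simp
  have thAq: "th (A * q) \<noteq> 0" using thqA by (simp add: mult.commute)
  have nzB: "th (X * q / B) \<noteq> 0" using braid_generic_nonzero[OF G] by simp
  have nzC: "th (X * q / C) \<noteq> 0" using braid_generic_nonzero[OF G] by simp
  have g1: "th (X * q ^ Suc m) \<noteq> 0" using braid_generic_nonzero[OF G] by simp
  have g2: "th (q ^ Suc m) \<noteq> 0" using braid_generic_nonzero[OF G] by simp
  have rel': "B * q * (C * q) * (K * q) = q * (X * q\<^sup>2) * (A * q)" using rel by (simp add: algebra_simps power2_eq_square)
  define EB where "EB = ep (B * K / X) m"
  define EC where "EC = ep (C * K / X) m"
  define EKA where "EKA = ep (K / A) m"
  define EK where "EK = ep K m"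
  define EKq where "EKq = ep (K * q) m"
  define DB where "DB = ep (X * q / B) m"
  define DC where "DC = ep (X * q / C) m"
  define DA where "DA = ep (q * A) m"
  define Dq where "Dq = ep q m"
  have nzD: "DB \<noteq> 0" "DC \<noteq> 0" "DA \<noteq> 0" "Dq \<noteq> 0" "th (X * q / B * q ^ m) \<noteq> 0"
    "th (X * q / C * q ^ m) \<noteq> 0" "th (q * A * q ^ m) \<noteq> 0" "th (q * q ^ m) \<noteq> 0"
    using Gs(5,6,7,4) unfolding DB_def DC_def DA_def Dq_def epoch_Suc by auto
  have r1: "braid_rhs X A K B C (Suc m) = EB * th (B * K / X * q ^ m) * (EC * th (C * K / X * q ^ m)) * (th K * EKq)
       * (EKA * th (K / A * q ^ m)) / (DB * th (X * q / B * q ^ m) * (DC * th (X * q / C * q ^ m))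
       * (DA * th (q * A * q ^ m)) * (Dq * th (q * q ^ m))) * X ^ Suc m"
    unfolding braid_rhs_eq[OF X A K B C rel Gs(2)] epoch_Suc[of "B * K / X"] epoch_Suc[of "C * K / X"] epoch_Suc_shift[of K]
      epoch_Suc[of "K / A"] epoch_Suc[of "X * q / B"] epoch_Suc[of "X * q / C"] epoch_Suc[of "q * A"] epoch_Suc[of q]
      EB_def EC_def EKA_def EKq_def DB_def DC_def DA_def Dq_def ..
  have r2: "braid_coeff1 X K m * braid_rhs X A K B C m = X * th (K / X * q ^ m) / (th (X * q ^ Suc m) * th (q ^ Suc m))
       * (EB * EC * (EK * th (K * q ^ m)) * EKA / (DB * DC * DA * Dq) * X ^ m)"
    unfolding braid_rhs_eq[OF X A K B C rel Gs(2)] braid_coeff1_def EB_def EC_def EKA_def EK_def DB_def DC_def DA_def Dq_def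
    by (simp add: field_simps)
  have eK: "EK * th (K * q ^ m) = th K * EKq" unfolding EK_def EKq_def by (metis epoch_Suc epoch_Suc_shift)
  have eB: "ep (X * q / B * q) m = DB * th (X * q / B * q ^ m) / th (X * q / B)"
    unfolding DB_def using nzB by (metis epoch_Suc epoch_Suc_shift nonzero_mult_div_cancel_left)
  have eC: "ep (X * q / C * q) m = DC * th (X * q / C * q ^ m) / th (X * q / C)"
    unfolding DC_def using nzC by (metis epoch_Suc epoch_Suc_shift nonzero_mult_div_cancel_left)
  have eA: "ep (q * A * q) m = DA * th (q * A * q ^ m) / th (q * A)"
    unfolding DA_def using thqA by (metis epoch_Suc epoch_Suc_shift nonzero_mult_div_cancel_left)
  have r3: "braid_rhs (X * q\<^sup>2) (A * q) (K * q) (B * q) (C * q) m = EB * EC * EKq * EKA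
       / (ep (X * q / B * q) m * ep (X * q / C * q) m * ep (q * A * q) m * Dq) * (X * q\<^sup>2) ^ m"
  proof -
    have a: "B * q * (K * q) / (X * q\<^sup>2) = B * K / X" "C * q * (K * q) / (X * q\<^sup>2) = C * K / X"
      "K * q / (A * q) = K / A" "X * q\<^sup>2 * q / (B * q) = X * q / B * q" "X * q\<^sup>2 * q / (C * q) = X * q / C * q"
      "q * (A * q) = q * A * q"
      using q_nonzero X A B C by (auto simp: field_simps power2_eq_square)
    have XA: "X * q\<^sup>2 \<noteq> 0" "A * q \<noteq> 0" "K * q \<noteq> 0" "B * q \<noteq> 0" "C * q \<noteq> 0" using X A K B C q_nonzero by auto
    show ?thesis unfolding braid_rhs_eq[OF XA rel' thAq] a EB_def EC_def EKA_def EKq_def Dq_def ..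
  qed
  have af: "X * (th (B * K / X * q ^ m) * th (C * K / X * q ^ m) * th (K / A * q ^ m) * th (X * q ^ Suc m))
    - (X * (th (K / X * q ^ m) * th (X * q / B * q ^ m) * th (X * q / C * q ^ m) * th (q * A * q ^ m))
      + K * q ^ m * (th (K * q ^ (2 * m + 1)) * th B * th C * th (X / A))) = 0"
    using theta_addition_rhs[OF X A K B C rel, of m] by simp
  have pw: "(X * q\<^sup>2) ^ m = X ^ m * q ^ m * q ^ m" by (simp add: power_mult_distrib power2_eq_square)
  define Z where "Z = EB * EC * th K * EKq * EKA * X ^ m / (DB * DC * DA * Dq * th (X * q / B * q ^ m)
      * th (X * q / C * q ^ m) * th (q * A * q ^ m) * th (q * q ^ m) * th (X * q ^ Suc m))"
  have key: "braid_rhs X A K B C (Suc m) - (braid_coeff1 X K m * braid_rhs X A K B C m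
           + braid_coeff2 X A K B C m * braid_rhs (X * q\<^sup>2) (A * q) (K * q) (B * q) (C * q) m)
    = Z * (X * (th (B * K / X * q ^ m) * th (C * K / X * q ^ m) * th (K / A * q ^ m) * th (X * q ^ Suc m))
    - (X * (th (K / X * q ^ m) * th (X * q / B * q ^ m) * th (X * q / C * q ^ m) * th (q * A * q ^ m))
      + K * q ^ m * (th (K * q ^ (2 * m + 1)) * th B * th C * th (X / A))))"
    unfolding r1 r2 eK r3 eB eC eA braid_coeff2_def pw Z_def using nzD g1 g2 nzB nzC thqA q_nonzero X
    by (simp add: field_simps)
  show ?thesis using key af by simp
qed

lemma braid_generic_shift:
  assumes G: "braid_generic X A B C (Suc m)" and B: "B \<noteq> 0" and C: "C \<noteq> 0" and A: "A \<noteq> 0" and X: "X \<noteq> 0"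
  shows "braid_generic (X * q\<^sup>2) (A * q) (B * q) (C * q) m"
proof -
  have Gs: "th X \<noteq> 0" "th A \<noteq> 0" "ep (q * X) (2 * Suc m) \<noteq> 0" "ep q (Suc m) \<noteq> 0"
    "ep (X * q / B) (Suc m) \<noteq> 0" "ep (X * q / C) (Suc m) \<noteq> 0" "ep (q * A) (Suc m) \<noteq> 0"
    using G by (auto simp: braid_generic_def)
  have a: "q * (X * q\<^sup>2) = q * X * q * q" "X * q\<^sup>2 * q / (B * q) = X * q / B * q"
    "X * q\<^sup>2 * q / (C * q) = X * q / C * q" "q * (A * q) = q * A * q"
    using q_nonzero B C by (auto simp: field_simps power2_eq_square)
  have "th (X * q\<^sup>2) \<noteq> 0" using braid_generic_nonzero[OF G] by simp
  moreover have "th (A * q) \<noteq> 0" using braid_generic_nonzero[OF G] by (simp add: mult.commute)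
  moreover have "ep (q * X * q * q) (2 * m) \<noteq> 0"
  proof -
    have "ep (q * X) (Suc (Suc (2 * m))) = th (q * X) * th (q * X * q) * ep (q * X * q * q) (2 * m)" by (rule epoch_Suc_Suc_shift)
    then show ?thesis using Gs(3) by auto
  qed
  moreover have "ep q m \<noteq> 0" using epoch_nonzero_le[OF Gs(4)] by simp
  moreover have "ep (X * q / B * q) m \<noteq> 0" using Gs(5) by (simp add: epoch_Suc_shift)
  moreover have "ep (X * q / C * q) m \<noteq> 0" using Gs(6) by (simp add: epoch_Suc_shift)
  moreover have "ep (q * A * q) m \<noteq> 0" using Gs(7) by (simp add: epoch_Suc_shift)
  ultimately show ?thesis unfolding braid_generic_def a by simp
qed

lemma braid_sum_column0:
  assumes "X \<noteq> 0" "A \<noteq> 0" "K \<noteq> 0" "B \<noteq> 0" "C \<noteq> 0"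
    and "B * C * K = q * X * A" and "braid_generic X A B C n"
  shows "(\<Sum>l\<le>n. braid_summand X A K B C n l) = braid_rhs X A K B C n"
  using assms
proof (induction n arbitrary: X A K B C)
  case 0
  then show ?case by (simp add: braid_summand_def braid_rhs_def braid_generic_def Mcoef_def Dcoef_def)
next
  case (Suc m)
  note nz = Suc.prems(1-5) and rel = Suc.prems(6) and G = Suc.prems(7)
  have rel': "B * q * (C * q) * (K * q) = q * (X * q\<^sup>2) * (A * q)"
    using rel by (simp add: algebra_simps power2_eq_square)
  have "(\<Sum>l\<le>Suc m. braid_summand X A K B C (Suc m) l)
      = braid_coeff1 X K m * (\<Sum>l\<le>m. braid_summand X A K B C m l)
        + braid_coeff2 X A K B C m * (\<Sum>l\<le>m. braid_summand (X * q\<^sup>2) (A * q) (K * q) (B * q) (C * q) m l)"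
    by (rule sum_atMost_Suc_Pascal_recurrence)
       (use braid_summand_Suc_0[OF nz(1,3) G] braid_summand_Suc_Suc[OF _ nz rel G]
         braid_summand_Suc_diag[OF nz rel G] in auto)
  also have "\<dots> = braid_rhs X A K B C (Suc m)"
    using Suc.IH[OF nz rel braid_generic_mono[OF G]] braid_rhs_Suc[OF nz rel G]
      Suc.IH[OF _ _ _ _ _ rel' braid_generic_shift[OF G nz(4,5,2,1)]] nz q_nonzero by simp
  finally show ?case .
qed

lemma Mcoef_shift:
  assumes ln: "l \<le> n" and nz: "th X \<noteq> 0" "th (X * q ^ (2 * m)) \<noteq> 0" "ep (q * X) (2 * m + (n + l)) \<noteq> 0"
    "ep q (n - l) \<noteq> 0"
  shows "Mc (m + n) (m + l) X K * (q ^ (2 * m)) ^ (n - l) * ep (q * X) (2 * m) * th X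
       = Mc n l (X * q ^ (2 * m)) (K * q ^ (2 * m)) * ep K (2 * m) * th (X * q ^ (2 * m))"
proof -
  have a: "K * q ^ (2 * m) / (X * q ^ (2 * m)) = K / X" "q * (X * q ^ (2 * m)) = q * X * q ^ (2 * m)"
    "X * q ^ (2 * m) * q ^ (2 * l) = X * q ^ (2 * (m + l))"
    using q_nonzero by (auto simp: field_simps power_add)
  have b: "m + n + (m + l) = 2 * m + (n + l)" "m + n - (m + l) = n - l" by auto
  have e1: "ep (q * X) (2 * m + (n + l)) = ep (q * X) (2 * m) * ep (q * X * q ^ (2 * m)) (n + l)" by (rule epoch_add)
  have e2: "ep K (2 * m + (n + l)) = ep K (2 * m) * ep (K * q ^ (2 * m)) (n + l)" by (rule epoch_add)
  have n1: "ep (q * X) (2 * m) \<noteq> 0" "ep (q * X * q ^ (2 * m)) (n + l) \<noteq> 0" using nz(3) unfolding e1 by auto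
  have M1: "Mc (m + n) (m + l) X K = ep K (m + n + (m + l)) * ep (K / X) (m + n - (m + l))
     / (ep (q * X) (m + n + (m + l)) * ep q (m + n - (m + l))) * (th (X * q ^ (2 * (m + l))) / th X) * X ^ (m + n - (m + l))"
    by (rule Mcoef_le) (use ln in simp)
  have M2: "Mc n l (X * q ^ (2 * m)) (K * q ^ (2 * m)) = ep (K * q ^ (2 * m)) (n + l) * ep (K * q ^ (2 * m) / (X * q ^ (2 * m))) (n - l)
     / (ep (q * (X * q ^ (2 * m))) (n + l) * ep q (n - l)) * (th (X * q ^ (2 * m) * q ^ (2 * l)) / th (X * q ^ (2 * m)))
     * (X * q ^ (2 * m)) ^ (n - l)"
    by (rule Mcoef_le[OF ln])
  show ?thesis
    unfolding M1 M2 b a e1 e2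
    using n1 nz(1,2,4) q_nonzero by (simp add: field_simps power_mult_distrib)
qed

lemma Dcoef_add:
  assumes nz: "ep (X * q / B) (m + l) \<noteq> 0" "ep (X * q / C) (m + l) \<noteq> 0" and B: "B \<noteq> 0" and C: "C \<noteq> 0"
  shows "Dc (m + l) X B C = Dc m X B C * Dc l (X * q ^ (2 * m)) (B * q ^ m) (C * q ^ m)"
proof -
  have a: "X * q ^ (2 * m) * q / (B * q ^ m) = X * q / B * q ^ m" "X * q ^ (2 * m) * q / (C * q ^ m) = X * q / C * q ^ m"
    "X * q ^ (2 * m) * q / (B * q ^ m * (C * q ^ m)) = X * q / (B * C)"
  proof -
    have qq: "q ^ (2 * m) = q ^ m * q ^ m" by (simp add: mult_2 power_add)
    show "X * q ^ (2 * m) * q / (B * q ^ m) = X * q / B * q ^ m" "X * q ^ (2 * m) * q / (C * q ^ m) = X * q / C * q ^ m"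
      "X * q ^ (2 * m) * q / (B * q ^ m * (C * q ^ m)) = X * q / (B * C)"
      unfolding qq using q_nonzero B C by (auto simp: field_simps)
  qed
  have n1: "ep (X * q / B) m \<noteq> 0" "ep (X * q / B * q ^ m) l \<noteq> 0" using nz(1) unfolding epoch_add by auto
  have n2: "ep (X * q / C) m \<noteq> 0" "ep (X * q / C * q ^ m) l \<noteq> 0" using nz(2) unfolding epoch_add by auto
  show ?thesis unfolding Dcoef_def a epoch_add[of _ m l] using n1 n2
    by (simp add: field_simps power_add)
qed

lemma Dcoef_factor:
  assumes X: "X \<noteq> 0" and A: "A \<noteq> 0" and K: "K \<noteq> 0" and B: "B \<noteq> 0" and C: "C \<noteq> 0"
    and rel: "B * C * K = q * X * A"
    and nz: "ep (X * q / B) k \<noteq> 0" "ep (X * q / C) k \<noteq> 0" "ep (A * q / B) k \<noteq> 0" "ep (A * q / C) k \<noteq> 0"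
  shows "Dc k X B C = Dc k K (B * K / X) (C * K / X) * Dc k A B C"
proof -
  have Cv: "C = q * X * A / (B * K)" using rel B K by (simp add: field_simps)
  have a: "K * q / (B * K / X) = X * q / B" "K * q / (C * K / X) = X * q / C" "B * K / X = A * q / C" "C * K / X = A * q / B"
    using X K B C A q_nonzero unfolding Cv by (auto simp: field_simps)
  have b: "K * q / (B * K / X * (C * K / X)) = X / A" "A * q / (B * C) = K / X" "X * q / (B * C) = K / A"
    using X K B C A q_nonzero unfolding Cv by (auto simp: field_simps)
  show ?thesis unfolding Dcoef_def
    unfolding a(1,2) b
    unfolding a(3,4)
    using nz X A K by (simp add: field_simps power_divide)
qed

text \<open>Shifting \<open>X, A, K\<close> by \<open>q\<^bsup>2k\<^esup>\<close> and \<open>B, C\<close> by \<open>q\<^bsup>k\<^esup>\<close> turns the \<open>(k + n, k)\<close>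
  entry into a multiple of the \<open>(n, 0)\<close> entry, to which \<open>braid_sum_column0\<close> applies.\<close>
lemma braid_sum_entry:
  assumes X: "X \<noteq> 0" and A: "A \<noteq> 0" and K: "K \<noteq> 0" and B: "B \<noteq> 0" and C: "C \<noteq> 0"
    and rel: "B * C * K = q * X * A"
    and g: "th X \<noteq> 0" "th A \<noteq> 0" "ep (q * X) (2 * (k + n)) \<noteq> 0" "ep q (k + n) \<noteq> 0"
      "ep (X * q / B) (k + n) \<noteq> 0" "ep (X * q / C) (k + n) \<noteq> 0" "ep (q * A) (2 * k + n) \<noteq> 0"
      "ep (A * q / B) k \<noteq> 0" "ep (A * q / C) k \<noteq> 0"
  shows "(\<Sum>l\<le>n. Mc (k + n) (k + l) X K * Dc (k + l) X B C * Mc (k + l) k A X)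
       = Dc (k + n) K (B * K / X) (C * K / X) * Mc (k + n) k A K * Dc k A B C"
proof -
  define X2 A2 K2 B2 C2 where "X2 = X * q ^ (2 * k)" "A2 = A * q ^ (2 * k)" "K2 = K * q ^ (2 * k)"
    "B2 = B * q ^ k" "C2 = C * q ^ k"
  have nz2: "X2 \<noteq> 0" "A2 \<noteq> 0" "K2 \<noteq> 0" "B2 \<noteq> 0" "C2 \<noteq> 0" using X A K B C q_nonzero by (auto simp: X2_A2_K2_B2_C2_def)
  have qq: "q ^ (2 * k) = q ^ k * q ^ k" by (simp add: mult_2 power_add)
  have rel2: "B2 * C2 * K2 = q * X2 * A2" using rel unfolding X2_A2_K2_B2_C2_def qq by (simp add: algebra_simps)
  have tX2: "th X2 \<noteq> 0" unfolding X2_A2_K2_B2_C2_def by (rule theta_q_power_nonzero[OF g(3) _ g(1)]) simp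
  have tA2: "th A2 \<noteq> 0" unfolding X2_A2_K2_B2_C2_def by (rule theta_q_power_nonzero[OF g(7) _ g(2)]) simp
  have eX: "ep (q * X) (2 * k + 2 * n) = ep (q * X) (2 * k) * ep (q * X2) (2 * n)"
    unfolding epoch_add X2_A2_K2_B2_C2_def by (simp add: mult.assoc)
  have eA: "ep (q * A) (2 * k + n) = ep (q * A) (2 * k) * ep (q * A2) n"
    unfolding epoch_add X2_A2_K2_B2_C2_def by (simp add: mult.assoc)
  have eB: "ep (X * q / B) (k + n) = ep (X * q / B) k * ep (X2 * q / B2) n"
  proof -
    have "X2 * q / B2 = X * q / B * q ^ k" using q_nonzero B unfolding X2_A2_K2_B2_C2_def qq by (simp add: field_simps)
    then show ?thesis by (simp add: epoch_add)
  qed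
  have eC: "ep (X * q / C) (k + n) = ep (X * q / C) k * ep (X2 * q / C2) n"
  proof -
    have "X2 * q / C2 = X * q / C * q ^ k" using q_nonzero C unfolding X2_A2_K2_B2_C2_def qq by (simp add: field_simps)
    then show ?thesis by (simp add: epoch_add)
  qed
  have g3: "ep (q * X) (2 * k + 2 * n) \<noteq> 0" using g(3) by (simp add: algebra_simps)
  have G2: "braid_generic X2 A2 B2 C2 n"
    unfolding braid_generic_def using tX2 tA2 g3 eX epoch_nonzero_le[OF g(4), of n] g(5,6,7) eB eC eA by auto
  have core: "(\<Sum>l\<le>n. braid_summand X2 A2 K2 B2 C2 n l) = braid_rhs X2 A2 K2 B2 C2 n"
    using braid_sum_column0 nz2 rel2 G2 by blast
  have tq: "ep (q * X) (2 * k) \<noteq> 0" "ep (q * A) (2 * k) \<noteq> 0" "(q ^ (2 * k)) ^ n \<noteq> 0" using eX eA g3 g(7) q_nonzero by auto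
  define Fc where "Fc = ep K (2 * k) * th X2 / (ep (q * X) (2 * k) * th X) * Dc k X B C
      * (ep X (2 * k) * th A2 / (ep (q * A) (2 * k) * th A)) / (q ^ (2 * k)) ^ n"
  have TR: "Mc (k + n) (k + l) X K * Dc (k + l) X B C * Mc (k + l) k A X = Fc * braid_summand X2 A2 K2 B2 C2 n l" if ln: "l \<le> n" for l
  proof -
    have s1: "Mc (k + n) (k + l) X K * (q ^ (2 * k)) ^ (n - l) * ep (q * X) (2 * k) * th X = Mc n l X2 K2 * ep K (2 * k) * th X2"
      unfolding X2_A2_K2_B2_C2_def
      by (rule Mcoef_shift[OF ln g(1) tX2[unfolded X2_A2_K2_B2_C2_def]]) (use ln epoch_nonzero_le[OF g3] epoch_nonzero_le[OF g(4)] in auto)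
    have s2: "Mc (k + l) (k + 0) A X * (q ^ (2 * k)) ^ (l - 0) * ep (q * A) (2 * k) * th A = Mc l 0 A2 X2 * ep X (2 * k) * th A2"
      unfolding X2_A2_K2_B2_C2_def
      by (rule Mcoef_shift[OF _ g(2) tA2[unfolded X2_A2_K2_B2_C2_def]]) (use ln epoch_nonzero_le[OF g(7)] epoch_nonzero_le[OF g(4)] in auto)
    have s3: "Dc (k + l) X B C = Dc k X B C * Dc l X2 B2 C2"
      unfolding X2_A2_K2_B2_C2_def by (rule Dcoef_add[OF _ _ B C]) (use ln epoch_nonzero_le[OF g(5)] epoch_nonzero_le[OF g(6)] in auto)
    have pw: "(q ^ (2 * k)) ^ n = (q ^ (2 * k)) ^ (n - l) * (q ^ (2 * k)) ^ l"
      using ln by (simp add: power_add[symmetric])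
    have m1: "Mc (k + n) (k + l) X K = Mc n l X2 K2 * ep K (2 * k) * th X2 / ((q ^ (2 * k)) ^ (n - l) * ep (q * X) (2 * k) * th X)"
      using s1 tq g(1) q_nonzero by (simp add: field_simps)
    have m2: "Mc (k + l) k A X = Mc l 0 A2 X2 * ep X (2 * k) * th A2 / ((q ^ (2 * k)) ^ l * ep (q * A) (2 * k) * th A)"
      using s2 tq g(2) q_nonzero by (simp add: field_simps)
    show ?thesis unfolding m1 m2 s3 braid_summand_def Fc_def pw using tq g(1,2) q_nonzero by (simp add: field_simps)
  qed
  have lhs: "(\<Sum>l\<le>n. Mc (k + n) (k + l) X K * Dc (k + l) X B C * Mc (k + l) k A X) = Fc * braid_rhs X2 A2 K2 B2 C2 n"
    using TR core by (simp add: sum_distrib_left[symmetric])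
  have r1: "Dc (k + n) K (B * K / X) (C * K / X) = Dc k K (B * K / X) (C * K / X) * Dc n K2 (B2 * K2 / X2) (C2 * K2 / X2)"
  proof -
    have a: "K * q / (B * K / X) = X * q / B" "K * q / (C * K / X) = X * q / C" using K X B C by auto
    have b: "K * q ^ (2 * k) = K2" "B * K / X * q ^ k = B2 * K2 / X2" "C * K / X * q ^ k = C2 * K2 / X2"
      using q_nonzero X unfolding X2_A2_K2_B2_C2_def qq by (auto simp: field_simps)
    have "Dc (k + n) K (B * K / X) (C * K / X) = Dc k K (B * K / X) (C * K / X) * Dc n (K * q ^ (2 * k)) (B * K / X * q ^ k) (C * K / X * q ^ k)"
    proof (rule Dcoef_add)
      show "ep (K * q / (B * K / X)) (k + n) \<noteq> 0" unfolding a(1) by (rule g(5))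
      show "ep (K * q / (C * K / X)) (k + n) \<noteq> 0" unfolding a(2) by (rule g(6))
    qed (use K X B C in auto)
    then show ?thesis unfolding b .
  qed
  have r2: "Mc (k + n) (k + 0) A K * (q ^ (2 * k)) ^ (n - 0) * ep (q * A) (2 * k) * th A = Mc n 0 A2 K2 * ep K (2 * k) * th A2"
    unfolding X2_A2_K2_B2_C2_def
    by (rule Mcoef_shift[OF _ g(2) tA2[unfolded X2_A2_K2_B2_C2_def]]) (use epoch_nonzero_le[OF g(7)] epoch_nonzero_le[OF g(4)] in auto)
  have r2': "Mc (k + n) k A K = Mc n 0 A2 K2 * ep K (2 * k) * th A2 / ((q ^ (2 * k)) ^ n * ep (q * A) (2 * k) * th A)"
    using r2 tq g(2) q_nonzero by (simp add: field_simps)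
  have dd: "Dc k X B C = Dc k K (B * K / X) (C * K / X) * Dc k A B C"
    by (rule Dcoef_factor[OF X A K B C rel]) (use epoch_nonzero_le[OF g(5)] epoch_nonzero_le[OF g(6)] g(8,9) in auto)
  have ex: "ep X (2 * k) * th X2 = th X * ep (q * X) (2 * k)"
  proof -
    have "ep X (Suc (2 * k)) = ep X (2 * k) * th X2" unfolding X2_A2_K2_B2_C2_def by (rule epoch_Suc)
    moreover have "ep X (Suc (2 * k)) = th X * ep (q * X) (2 * k)" by (simp add: epoch_Suc_shift mult.commute)
    ultimately show ?thesis by simp
  qed
  show ?thesis
    unfolding lhs r1 r2' braid_rhs_def Fc_def dd
    using tq g(1,2) ex q_nonzero by (simp add: field_simps)
qed

end

section \<open>The matrix relations\<close>

lemma mmul_diag_right: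
  assumes "j \<le> N"
  shows "mmul N A (\<lambda>n m. if n = m then d n else 0) i j = A i j * d j"
proof -
  have "(\<Sum>l\<le>N. A i l * (if l = j then d l else 0)) = (\<Sum>l\<le>N. if l = j then A i j * d j else 0)"
    by (rule sum.cong) auto
  then show ?thesis using assms by (simp add: mmul_def)
qed

lemma mmul_diag_left:
  assumes "i \<le> N"
  shows "mmul N (\<lambda>n m. if n = m then d n else 0) A i j = d i * A i j"
proof -
  have "(\<Sum>l\<le>N. (if i = l then d i else 0) * A l j) = (\<Sum>l\<le>N. if i = l then d i * A i j else 0)"
    by (rule sum.cong) auto
  then show ?thesis using assms by (simp add: mmul_def)
qed

lemma S1mat_eq: "S1mat p q (z, x, k) = (\<lambda>n m. Mcoef p q n m (z\<^sup>2) (x\<^sup>2))"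
  by (simp add: S1mat_def)

lemma S2mat_eq: "S2mat p q r y (z, x, k) = (\<lambda>n m. if n = m then
    Dcoef p q n (z\<^sup>2) (r * (z * x / k) * y) (r / p * (z * x / k) * inverse y) else 0)"
  unfolding S2mat_def bpar_def cpar_def by (intro ext) simp

context elliptic_nome
begin

lemma Dcoef_mult_dual:
  assumes "b * c * b' * c' = (A * q)\<^sup>2" "A * q / b' = c" "A * q / c' = b" "A * q / b = c'" "A * q / c = b'"
    and "A \<noteq> 0" "b \<noteq> 0" "c \<noteq> 0" "b' \<noteq> 0" "c' \<noteq> 0"
    and "ep b i \<noteq> 0" "ep c i \<noteq> 0" "ep b' i \<noteq> 0" "ep c' i \<noteq> 0"
  shows "Dc i A b' c' * Dc i A b c = 1"
proof -
  have "Dc i A b' c' * Dc i A b c = (A * q / (b' * c') * (A * q / (b * c))) ^ i"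
    unfolding Dcoef_def assms(2-5) power_mult_distrib[symmetric] using assms(11-14)
    by (simp add: field_simps)
  also have "A * q / (b' * c') * (A * q / (b * c)) = 1"
    using assms(1,6-10) q_nonzero by (simp add: field_simps power2_eq_square)
  finally show ?thesis by simp
qed

lemma braid_sum_matrix_entry:
  assumes X: "X \<noteq> 0" and A: "A \<noteq> 0" and K: "K \<noteq> 0" and B: "B \<noteq> 0" and C: "C \<noteq> 0"
    and rel: "B * C * K = q * X * A"
    and tX: "th X \<noteq> 0" and tA: "th A \<noteq> 0"
    and gX: "\<And>n m. n \<le> N \<Longrightarrow> m \<le> n \<Longrightarrow> ep (q * X) (n + m) \<noteq> 0"
    and gA: "\<And>n m. n \<le> N \<Longrightarrow> m \<le> n \<Longrightarrow> ep (q * A) (n + m) \<noteq> 0 \<and> ep q (n - m) \<noteq> 0"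
    and gXBC: "\<And>n. n \<le> N \<Longrightarrow> ep (X * q / B) n \<noteq> 0 \<and> ep (X * q / C) n \<noteq> 0"
    and gABC: "\<And>n. n \<le> N \<Longrightarrow> ep (A * q / B) n \<noteq> 0 \<and> ep (A * q / C) n \<noteq> 0"
    and i: "i \<le> N" and j: "j \<le> N"
  shows "(\<Sum>l\<le>N. Mc i l X K * Dc l X B C * Mc l j A X)
       = Dc i K (B * K / X) (C * K / X) * Mc i j A K * Dc j A B C"
proof (cases "j \<le> i")
  case False
  then have "Mc i l X K * Dc l X B C * Mc l j A X = 0" for l by (cases "l \<le> i") (auto simp: Mcoef_def)
  moreover have "Mc i j A K = 0" using False by (simp add: Mcoef_def)
  ultimately show ?thesis by (simp add: sum.neutral)
next
  case True
  define n where "n = i - j"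
  have ijn: "i = j + n" using True by (simp add: n_def)
  have "(\<Sum>l\<le>N. Mc i l X K * Dc l X B C * Mc l j A X) = (\<Sum>l\<in>{j..i}. Mc i l X K * Dc l X B C * Mc l j A X)"
    by (rule sum.mono_neutral_right) (use i in \<open>auto simp: Mcoef_def\<close>)
  also have "\<dots> = (\<Sum>l\<le>n. Mc (j + n) (j + l) X K * Dc (j + l) X B C * Mc (j + l) j A X)"
    using sum.shift_bounds_cl_nat_ivl[of "\<lambda>l. Mc i l X K * Dc l X B C * Mc l j A X" 0 j n]
    unfolding ijn by (simp add: atLeast0AtMost add.commute)
  also have "\<dots> = Dc (j + n) K (B * K / X) (C * K / X) * Mc (j + n) j A K * Dc j A B C"
  proof (rule braid_sum_entry[OF X A K B C rel tX tA])
    have "2 * (j + n) = i + i" using ijn by simp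
    then show "ep (q * X) (2 * (j + n)) \<noteq> 0" using gX[OF i, of i] by simp
    show "ep q (j + n) \<noteq> 0" using gA[OF i, of 0] ijn by simp
    show "ep (X * q / B) (j + n) \<noteq> 0" "ep (X * q / C) (j + n) \<noteq> 0" using gXBC[OF i] ijn by auto
    have "2 * j + n = i + j" using ijn by simp
    then show "ep (q * A) (2 * j + n) \<noteq> 0" using gA[OF i True] by metis
    show "ep (A * q / B) j \<noteq> 0" "ep (A * q / C) j \<noteq> 0" using gABC[OF j] by auto
  qed
  finally show ?thesis using ijn by simp
qed

lemma S2mat_involution:
  assumes y: "y \<noteq> 0" and r: "r\<^sup>2 = p * q" and z: "z \<noteq> 0" and x: "x \<noteq> 0" and k: "k \<noteq> 0"
    and gen: "gen_S2 p q r y N (z, x, k)" "gen_S2 p q r y N (s2 (z, x, k))"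
  shows "mat_eq N (mmul N (S2mat p q r y (s2 (z, x, k))) (S2mat p q r y (z, x, k))) idmat"
  unfolding mat_eq_def
proof (intro allI impI)
  fix i j assume i: "i \<le> N" and j: "j \<le> N"
  define A b c b' c' where "A = z\<^sup>2" "b = r * (z * x / k) * y" "c = r / p * (z * x / k) * inverse y"
    "b' = r * (z * k / x) * y" "c' = r / p * (z * k / x) * inverse y"
  have r0: "r \<noteq> 0" using r p_nonzero q_nonzero by auto
  have pr: "p = r\<^sup>2 / q" using r q_nonzero by simp
  have rels: "b * c * b' * c' = (A * q)\<^sup>2" "A * q / b' = c" "A * q / c' = b" "A * q / b = c'" "A * q / c = b'"
    using x z k y r0 q_nonzero unfolding A_b_c_b'_c'_def pr by (auto simp: field_simps power2_eq_square)
  have "ep b i \<noteq> 0" "ep c i \<noteq> 0" "ep b' i \<noteq> 0" "ep c' i \<noteq> 0"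
    using gen i rels unfolding gen_S2_def s2_def bpar_def cpar_def A_b_c_b'_c'_def by auto
  then have "Dc i A b' c' * Dc i A b c = 1"
    by (intro Dcoef_mult_dual rels) (use z x k y r0 p_nonzero in \<open>auto simp: A_b_c_b'_c'_def\<close>)
  then show "mmul N (S2mat p q r y (s2 (z, x, k))) (S2mat p q r y (z, x, k)) i j = idmat i j"
    unfolding s2_def prod.case S2mat_eq mmul_diag_left[OF i] A_b_c_b'_c'_def
    by (auto simp: idmat_def mult.commute)
qed

lemma S_braid_relation:
  assumes y: "y \<noteq> 0" and r: "r\<^sup>2 = p * q" and z: "z \<noteq> 0" and x: "x \<noteq> 0" and k: "k \<noteq> 0"
    and gen1: "gen_S1 p q N (z, x, k)" "gen_S1 p q N (s2 (s1 (z, x, k)))"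
    and gen2: "gen_S2 p q r y N (z, x, k)" "gen_S2 p q r y N (s1 (z, x, k))"
  shows "mat_eq N
     (mmul N (mmul N (S1mat p q (s2 (s1 (z, x, k)))) (S2mat p q r y (s1 (z, x, k)))) (S1mat p q (z, x, k)))
     (mmul N (mmul N (S2mat p q r y (s1 (s2 (z, x, k)))) (S1mat p q (s2 (z, x, k)))) (S2mat p q r y (z, x, k)))"
  unfolding mat_eq_def
proof (intro allI impI)
  fix i j assume i: "i \<le> N" and j: "j \<le> N"
  define X A K B C where "X = x\<^sup>2" "A = z\<^sup>2" "K = k\<^sup>2" "B = r * (z * x / k) * y"
    "C = r / p * (z * x / k) * inverse y"
  have r0: "r \<noteq> 0" using r p_nonzero q_nonzero by auto
  have nz: "X \<noteq> 0" "A \<noteq> 0" "K \<noteq> 0" "B \<noteq> 0" "C \<noteq> 0"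
    using x z k r0 y p_nonzero by (auto simp: X_A_K_B_C_def)
  have "B * C * K = r\<^sup>2 / p * (x * z) * (x * z) * (y * inverse y)"
    using k by (simp add: X_A_K_B_C_def field_simps power2_eq_square)
  then have rel: "B * C * K = q * X * A"
    using y p_nonzero unfolding r by (simp add: X_A_K_B_C_def field_simps power2_eq_square)
  have s: "s1 (z, x, k) = (x, z, k)" "s2 (z, x, k) = (z, k, x)" "s2 (x, z, k) = (x, k, z)"
    "s1 (z, k, x) = (k, z, x)"
    by (simp_all add: s1_def s2_def)
  have par: "r * (x * z / k) * y = B" "r / p * (x * z / k) * inverse y = C"
    "r * (k * z / x) * y = B * K / X" "r / p * (k * z / x) * inverse y = C * K / X"
    using x k by (auto simp: X_A_K_B_C_def field_simps power2_eq_square)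
  have S: "S1mat p q (s2 (s1 (z, x, k))) = (\<lambda>n m. Mc n m X K)"
    "S2mat p q r y (s1 (z, x, k)) = (\<lambda>n m. if n = m then Dc n X B C else 0)"
    "S1mat p q (z, x, k) = (\<lambda>n m. Mc n m A X)"
    "S2mat p q r y (s1 (s2 (z, x, k))) = (\<lambda>n m. if n = m then Dc n K (B * K / X) (C * K / X) else 0)"
    "S1mat p q (s2 (z, x, k)) = (\<lambda>n m. Mc n m A K)"
    "S2mat p q r y (z, x, k) = (\<lambda>n m. if n = m then Dc n A B C else 0)"
    unfolding s S1mat_eq S2mat_eq par by (simp_all add: X_A_K_B_C_def cong: if_cong)
  have "(\<Sum>l\<le>N. Mc i l X K * Dc l X B C * Mc l j A X)
      = Dc i K (B * K / X) (C * K / X) * Mc i j A K * Dc j A B C"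
  proof (rule braid_sum_matrix_entry[OF nz rel _ _ _ _ _ _ i j])
    show "th X \<noteq> 0" "th A \<noteq> 0"
      using gen1 by (simp_all add: gen_S1_def s1_def s2_def X_A_K_B_C_def)
  qed (use gen1 gen2 in \<open>auto simp: gen_S1_def gen_S2_def s1_def s2_def bpar_def cpar_def
         X_A_K_B_C_def mult.commute\<close>)
  moreover have "mmul N (mmul N (\<lambda>n m. Mc n m X K) (\<lambda>n m. if n = m then Dc n X B C else 0))
      (\<lambda>n m. Mc n m A X) i j = (\<Sum>l\<le>N. Mc i l X K * Dc l X B C * Mc l j A X)"
    unfolding mmul_def[of N _ "\<lambda>n m. Mc n m A X"] by (intro sum.cong) (auto simp: mmul_diag_right)
  ultimately show "mmul N (mmul N (S1mat p q (s2 (s1 (z, x, k)))) (S2mat p q r y (s1 (z, x, k))))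
      (S1mat p q (z, x, k)) i j =
    mmul N (mmul N (S2mat p q r y (s1 (s2 (z, x, k)))) (S1mat p q (s2 (z, x, k))))
      (S2mat p q r y (z, x, k)) i j"
    unfolding S mmul_diag_right[OF j] mmul_diag_left[OF i] by simp
qed

end

theorem mainTheorem5:
  fixes p q r y z x k :: complex and N :: nat and u :: triple
  assumes "0 < norm p" "norm p < 1" "0 < norm q" "norm q < 1"
    and "y \<noteq> 0" and "r\<^sup>2 = p * q"
    and "z \<noteq> 0" "x \<noteq> 0" "k \<noteq> 0"
    and "u = (z, x, k)"
    and "gen_S1 p q N u" "gen_S1 p q N (s2 (s1 u))"
    and "gen_S2 p q r y N u" "gen_S2 p q r y N (s2 u)" "gen_S2 p q r y N (s1 u)"
        "gen_S2 p q r y N (s1 (s2 u))"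
  shows "mat_eq N (mmul N (S2mat p q r y (s2 u)) (S2mat p q r y u)) idmat \<and>
         mat_eq N
           (mmul N (mmul N (S1mat p q (s2 (s1 u))) (S2mat p q r y (s1 u))) (S1mat p q u))
           (mmul N (mmul N (S2mat p q r y (s1 (s2 u))) (S1mat p q (s2 u))) (S2mat p q r y u))"
proof -
  interpret elliptic_nome p q
    by unfold_locales (use assms(1-4) in auto)
  show ?thesis
    using S2mat_involution[OF assms(5-9)] S_braid_relation[OF assms(5-9)] assms(11-15)
    unfolding \<open>u = (z, x, k)\<close> by blast
qed

end
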